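(* Under the standing setting and assumptions (A0)–(A3) below, let $\theta:\mathbb N\times(0,\infty)\to\mathbb N$ satisfy $\sum_{n=k}^{\theta(k,b')}\lambda_n\geq b'$ for all $b'>0$, $k\in\mathbb N$; let $\Lambda>\sum_{n=0}^\infty\lambda_n^2$, $c>\int\|\phi^*\|^2_{x^*}\,d\mu$ with $c>0$, and $b>\mathbb E[d^2(x_0,x^* )]$ with $b>0$. Put $C:=4(b+2\Lambda c)+\Lambda c$ and $D:=e^{2\Lambda}(b+C)/(2\underline\alpha)$. Then $\liminf_{n\to\infty}\mathbb E[d^2(x_n,x^* )]=0$, and more precisely for every $\varepsilon>0$ and $N\in\mathbb N$ there is $n\in[N,\theta(N,D/\varepsilon)]$ with $\mathbb E[d^2(x_n,x^* )]<\varepsilon$.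
   Context: Geometry. A Hadamard space is a complete CAT(0) space: a geodesic metric space $(X,d)$ with $d^2(\gamma(tl),x)\leq (1-t)d^2(\gamma(0),x)+td^2(\gamma(l),x)-t(1-t)d^2(\gamma(0),\gamma(l))$ for all $x\in X$, geodesics $\gamma:[0,l]\to X$, $t\in[0,1]$; it is uniquely geodesic, $\gamma_{x,y}$ denoting the geodesic from $x$ to $y$. For $x\in X$, $\angle_x(\gamma,\eta):=\lim_{s,t\to0^+}\bar\angle_x(\gamma(s),\eta(t))$ is the Aleksandrov angle between nonconstant geodesics issuing from $x$; $\Sigma_xX$ is the completion of such geodesics modulo $\angle_x=0$; the tangent space $T_xX$ is the Euclidean cone over $\Sigma_xX$ (elements $t\gamma$, $t\ge0$, all $0\gamma$ identified to $0_x$, $\lambda(t\gamma):=(\lambda t)\gamma$), with metric $d_x(t\gamma,s\eta)=\sqrt{t^2+s^2-2ts\cos\angle_x(\gamma,\eta)}$, $\|t\gamma\|_x=t$, $g_x(t\gamma,s\eta)=ts\cos\angle_x(\gamma,\eta)$; $TX=\bigcup_xT_xX$. $\log_x:X\to T_xX$, $\log_xa:=d(x,a)\gamma_{x,a}$ ($a\ne x$), $\log_xx:=0_x$. Vector fields. $A:X\to2^{TX}$ with $A(x)\subseteq T_xX$ is monotone if $g_x(u,\log_xy)\le-g_y(v,\log_yx)$ for all $u\in A(x),v\in A(y)$, and strongly monotone with modulus $\alpha>0$ if $g_x(u,\log_xy)\le-g_y(v,\log_yx)-\alpha d^2(x,y)$. For monotone $A$ and $\lambda>0$, the resolvent $J_\lambda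 x$ is the unique $z$ with $\tfrac1\lambda\log_zx\in A(z)$ (if it exists); $A$ satisfies the surjectivity condition if such $z$ exists for all $\lambda>0,x\in X$. The Yosida approximate is $A_\lambda x:=\tfrac1\lambda\log_{J_\lambda x}x\in T_{J_\lambda x}X$. Integration. For a probability space and a separable Hadamard space $Y$, $L^p$ consists of measurable $Y$-valued maps with finite $p$-th moment of distance; the integral/expectation of an $L^1$ map is the barycenter of its distribution (minimizer of $z\mapsto\int(d^2(z,w)-d^2(w,y))$), and conditional expectation $\mathbb E[x\mid\mathcal G]$ of $x\in L^2$ is the $\mathcal G$-measurable $L^2$ map minimizing $\int d^2(z,x)$ (extended continuously to $L^1$); this applies to $Y=X$ and $Y=T_xX$. Standing setting. $(E,\mathcal E,\mu)$ and $(\Omega,\mathcal F,\mathbb P)$ are probability spaces; $X$ is a separable Hadamard space with every $T_xX$ separable. $A:E\times X\to2^{TX}$, $A(s,x)\subseteq T_xX$, is a random monotone vector field: each $A(s,\cdot)$ is monotone and $s\mapsto J_\lambda(s,x)$ is $\mathcal E/\mathcal B(X)$-measurable for every $x,\lambda$, where $J_\lambda(s,\cdot)$, $A_\lambda(s,\cdot)$ denote resolvent and Yosida approximate of $A(s,\cdot)$; moreover each $A(s,\cdot)$ satisfies the surjectivity condition. For $x\in X$, $S^p_A(x)$ is the set of measurable $\phi:E\to T_xX$ with $\phi(s)\in A(s,x)$ for all $s$ and $\phi\in L^p(E,T_xX,\mu)$; the mean field is $\underline A(x):=\{\int\phi\,d\mu\mid\phi\in S^1_A(x)\}$; $\mathcal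 Z_A(2):=\{x\mid\exists\phi\in S^2_A(x),\ \int\phi\,d\mu=0_x\}$. Given $x_0\in X$, $(\lambda_n)\subseteq(0,\infty)$ and random variables $\xi_n:\Omega\to E$, the iteration is $x_{n+1}:=J_{\lambda_n}(\xi_{n+1},x_n)$; $\mathcal F_n:=\sigma(\xi_1,\dots,\xi_n)$ ($\mathcal F_0$ trivial), $\mathbb E_n[\cdot]:=\mathbb E[\cdot\mid\mathcal F_n]$. Note $\|A_{\lambda_n}(\xi_{n+1},x_n)\|_{x_{n+1}}=d(x_n,x_{n+1})/\lambda_n$. Assumptions. (A0) $\sum_n\lambda_n^2<\infty$, $\sum_n\lambda_n=\infty$, and $(\xi_{n+1})$ is i.i.d. with distribution $\mu$. (A1) each $A(s,\cdot)$ is strongly monotone with modulus $\alpha(s)\in(0,1]$, where $\alpha:E\to(0,1]$ is measurable with $\underline\alpha:=\int\alpha\,d\mu>0$. (A2) $\underline A$ has a zero $x^*$ (i.e. $0_{x^*}\in\underline A(x^* )$) with $x^*\in\mathcal Z_A(2)$; a fixed $\phi^*\in S^2_A(x^* )$ with $\int\phi^*\,d\mu=0_{x^*}$ is chosen. (A3) $\mathbb E_n[g_{x^*}(\phi^*(\xi_{n+1}),\log_{x^*}x_n)]=0$ a.s. for every $n\in\mathbb N$. *)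

theory Defs
  imports "HOL-Probability.Probability"
begin

definition is_geodesic :: "(real \<Rightarrow> 'a::metric_space) \<Rightarrow> real \<Rightarrow> bool" where
  "is_geodesic \<gamma> l \<longleftrightarrow> l \<ge> 0 \<and>
     (\<forall>s\<in>{0..l}. \<forall>t\<in>{0..l}. dist (\<gamma> s) (\<gamma> t) = \<bar>s - t\<bar>)"

text \<open>The whole type is a Hadamard space: complete (type class), geodesic and CAT(0).\<close>
definition hadamard :: "'a::complete_space itself \<Rightarrow> bool" where
  "hadamard (_::'a itself) \<longleftrightarrow>
     (\<forall>x y::'a. \<exists>\<gamma>. is_geodesic \<gamma> (dist x y) \<and> \<gamma> 0 = x \<and> \<gamma> (dist x y) = y) \<and>
     (\<forall>(\<gamma>::real \<Rightarrow> 'a) l x t. is_geodesic \<gamma> l \<longrightarrow> t \<in> {0..1} \<longrightarrow>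
        (dist (\<gamma> (t * l)) x)\<^sup>2 \<le> (1 - t) * (dist (\<gamma> 0) x)\<^sup>2 + t * (dist (\<gamma> l) x)\<^sup>2
                                   - t * (1 - t) * (dist (\<gamma> 0) (\<gamma> l))\<^sup>2)"

definition separable_type :: "'a::metric_space itself \<Rightarrow> bool" where
  "separable_type (_::'a itself) \<longleftrightarrow> (\<exists>D::'a set. countable D \<and> closure D = UNIV)"

text \<open>The point at distance s from x on the (unique) geodesic from x to y,
  for s in [0, d(x,y)].\<close>
definition gpt :: "'a::metric_space \<Rightarrow> 'a \<Rightarrow> real \<Rightarrow> 'a" where
  "gpt x y s = (THE p. dist x p = s \<and> dist p y = dist x y - s)"

definition cmp_angle :: "'a::metric_space \<Rightarrow> 'a \<Rightarrow> 'a \<Rightarrow> real" where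
  "cmp_angle x p q = arccos (((dist x p)\<^sup>2 + (dist x q)\<^sup>2 - (dist p q)\<^sup>2) / (2 * dist x p * dist x q))"

definition alex_angle :: "'a::metric_space \<Rightarrow> 'a \<Rightarrow> 'a \<Rightarrow> real" where
  "alex_angle x y z = Lim (at_right 0 \<times>\<^sub>F at_right 0) (\<lambda>(s,t). cmp_angle x (gpt x y s) (gpt x z t))"

text \<open>Elements of the space of directions (completion of nonconstant geodesics from x
  modulo zero angle) are represented by angle-Cauchy sequences of endpoints of geodesics
  issuing from x.  A tangent vector is a triple (base point x, length t, direction).
  Equality in the tangent space is the relation tdist = 0.\<close>
type_synonym 'a tv = "'a \<times> real \<times> (nat \<Rightarrow> 'a)"

definition dirseq :: "'a::metric_space \<Rightarrow> (nat \<Rightarrow> 'a) \<Rightarrow> bool" where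
  "dirseq x ys \<longleftrightarrow> (\<forall>k. ys k \<noteq> x) \<and>
     (\<forall>e>0. \<exists>N. \<forall>m\<ge>N. \<forall>n\<ge>N. alex_angle x (ys m) (ys n) < e)"

definition T :: "'a::metric_space \<Rightarrow> 'a tv set" where
  "T x = {(x', t, ys). x' = x \<and> (t = 0 \<or> (t > 0 \<and> dirseq x ys))}"

definition tbase :: "'a tv \<Rightarrow> 'a" where "tbase u = fst u"
definition tnorm :: "'a tv \<Rightarrow> real" where "tnorm u = fst (snd u)"
definition tdir :: "'a tv \<Rightarrow> nat \<Rightarrow> 'a" where "tdir u = snd (snd u)"

definition tangle :: "'a::metric_space tv \<Rightarrow> 'a tv \<Rightarrow> real" where
  "tangle u v = lim (\<lambda>k. alex_angle (tbase u) (tdir u k) (tdir v k))"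

definition tinner :: "'a::metric_space tv \<Rightarrow> 'a tv \<Rightarrow> real" where
  "tinner u v = tnorm u * tnorm v * cos (tangle u v)"

definition tdist :: "'a::metric_space tv \<Rightarrow> 'a tv \<Rightarrow> real" where
  "tdist u v = sqrt ((tnorm u)\<^sup>2 + (tnorm v)\<^sup>2 - 2 * tinner u v)"

definition tzero :: "'a \<Rightarrow> 'a tv" where "tzero x = (x, 0, \<lambda>_. x)"

definition tscale :: "real \<Rightarrow> 'a tv \<Rightarrow> 'a tv" where
  "tscale r u = (tbase u, r * tnorm u, tdir u)"

definition tlog :: "'a::metric_space \<Rightarrow> 'a \<Rightarrow> 'a tv" where
  "tlog x a = (if a = x then tzero x else (x, dist x a, \<lambda>_. a))"

text \<open>Membership in a subset of T x, up to the identification tdist = 0.\<close>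
definition tmem :: "'a::metric_space tv \<Rightarrow> 'a tv set \<Rightarrow> bool" where
  "tmem v S \<longleftrightarrow> (\<exists>u\<in>S. tbase u = tbase v \<and> tdist u v = 0)"

definition tsep :: "'a::metric_space \<Rightarrow> bool" where
  "tsep x \<longleftrightarrow> (\<exists>D. countable D \<and> D \<subseteq> T x \<and> (\<forall>u\<in>T x. \<forall>e>0. \<exists>w\<in>D. tdist u w < e))"

definition vfield :: "('a::metric_space \<Rightarrow> 'a tv set) \<Rightarrow> bool" where
  "vfield A \<longleftrightarrow> (\<forall>x. A x \<subseteq> T x)"

definition monotone_vf :: "('a::metric_space \<Rightarrow> 'a tv set) \<Rightarrow> bool" where
  "monotone_vf A \<longleftrightarrow> vfield A \<and> (\<forall>x y u v. u \<in> A x \<longrightarrow> v \<in> A y \<longrightarrow>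
     tinner u (tlog x y) \<le> - tinner v (tlog y x))"

definition strongly_monotone_vf :: "('a::metric_space \<Rightarrow> 'a tv set) \<Rightarrow> real \<Rightarrow> bool" where
  "strongly_monotone_vf A \<alpha> \<longleftrightarrow> vfield A \<and> \<alpha> > 0 \<and> (\<forall>x y u v. u \<in> A x \<longrightarrow> v \<in> A y \<longrightarrow>
     tinner u (tlog x y) \<le> - tinner v (tlog y x) - \<alpha> * (dist x y)\<^sup>2)"

definition resolvent :: "('a::metric_space \<Rightarrow> 'a tv set) \<Rightarrow> real \<Rightarrow> 'a \<Rightarrow> 'a" where
  "resolvent A l x = (THE z. tmem (tscale (1 / l) (tlog z x)) (A z))"

definition surjectivity_cond :: "('a::metric_space \<Rightarrow> 'a tv set) \<Rightarrow> bool" where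
  "surjectivity_cond A \<longleftrightarrow> (\<forall>l>0. \<forall>x. \<exists>z. tmem (tscale (1 / l) (tlog z x)) (A z))"

text \<open>Borel measurability into the separable space (T x, tdist): preimages of open balls.\<close>
definition tmeasurable :: "'e measure \<Rightarrow> 'a::metric_space \<Rightarrow> ('e \<Rightarrow> 'a tv) \<Rightarrow> bool" where
  "tmeasurable M x \<phi> \<longleftrightarrow> (\<forall>s\<in>space M. \<phi> s \<in> T x) \<and>
     (\<forall>w\<in>T x. \<forall>r. {s\<in>space M. tdist (\<phi> s) w < r} \<in> sets M)"

definition tLp :: "nat \<Rightarrow> 'e measure \<Rightarrow> 'a::metric_space \<Rightarrow> ('e \<Rightarrow> 'a tv) \<Rightarrow> bool" where
  "tLp p M x \<phi> \<longleftrightarrow> tmeasurable M x \<phi> \<and> integrable M (\<lambda>s. (tnorm (\<phi> s)) ^ p)"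

text \<open>z is the barycenter (integral) of the L1 map phi: it minimizes
  z' |-> int (d^2(z', phi) - d^2(phi, 0_x)).\<close>
definition tbary :: "'e measure \<Rightarrow> 'a::metric_space \<Rightarrow> ('e \<Rightarrow> 'a tv) \<Rightarrow> 'a tv \<Rightarrow> bool" where
  "tbary M x \<phi> z \<longleftrightarrow> z \<in> T x \<and> (\<forall>z'\<in>T x.
     (\<integral>s. (tdist z (\<phi> s))\<^sup>2 - (tdist (\<phi> s) (tzero x))\<^sup>2 \<partial>M)
       \<le> (\<integral>s. (tdist z' (\<phi> s))\<^sup>2 - (tdist (\<phi> s) (tzero x))\<^sup>2 \<partial>M))"

definition SA :: "nat \<Rightarrow> 'e measure \<Rightarrow> ('e \<Rightarrow> 'a::metric_space \<Rightarrow> 'a tv set) \<Rightarrow> 'a \<Rightarrow> ('e \<Rightarrow> 'a tv) set" where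
  "SA p M A x = {\<phi>. (\<forall>s\<in>space M. \<phi> s \<in> T x \<and> tmem (\<phi> s) (A s x)) \<and> tLp p M x \<phi>}"

definition zero_of_mean_field :: "'e measure \<Rightarrow> ('e \<Rightarrow> 'a::metric_space \<Rightarrow> 'a tv set) \<Rightarrow> 'a \<Rightarrow> bool" where
  "zero_of_mean_field M A x \<longleftrightarrow> (\<exists>\<phi>\<in>SA 1 M A x. tbary M x \<phi> (tzero x))"

definition ZA2 :: "'e measure \<Rightarrow> ('e \<Rightarrow> 'a::metric_space \<Rightarrow> 'a tv set) \<Rightarrow> 'a set" where
  "ZA2 M A = {x. \<exists>\<phi>\<in>SA 2 M A x. tbary M x \<phi> (tzero x)}"

definition filt :: "'w measure \<Rightarrow> 'e measure \<Rightarrow> (nat \<Rightarrow> 'w \<Rightarrow> 'e) \<Rightarrow> nat \<Rightarrow> 'w measure" where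
  "filt P M \<xi> n = sigma (space P) (\<Union>i\<in>{1..n}. {\<xi> i -` B \<inter> space P | B. B \<in> sets M})"

end

theory Submission
  imports Defs
begin

(* Fix s = xi_(n+1) and let z = J_lam(s, x_n). Strong monotonicity of A(s) at z and xs, combined
   with the law of cosines in the tangent cones (Alexandrov angles never exceed comparison angles
   in a CAT(0) space) and the fact that a |-> g_xs(phis(s), log_xs a) is |phis(s)|-Lipschitz,
   gives pointwise
     d^2(x_(n+1), xs) + 2 lam_n alpha(s) d^2(x_n, xs)
       <= (1 + 8 lam_n^2) d^2(x_n, xs) - 2 lam_n g_xs(phis(s), log_xs x_n) + 2 lam_n^2 |phis(s)|^2.
   In expectation the cross term vanishes by (A3), and since x_n is F_n-measurable and xi_(n+1) is
   independent of F_n, E[alpha(xi_(n+1)) d^2(x_n, xs)] = alpha_bar a_n for a_n = E d^2(x_n, xs).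
   The resulting recursion first bounds a_n uniformly and then the weighted sums of lam_n a_n by D,
   so a_n must drop below epsilon inside every window of lam-mass D / epsilon. *)

section \<open>Comparison angles\<close>

definition cmp_cos :: "'a::metric_space \<Rightarrow> 'a \<Rightarrow> 'a \<Rightarrow> real" where
  "cmp_cos x p q = ((dist x p)\<^sup>2 + (dist x q)\<^sup>2 - (dist p q)\<^sup>2) / (2 * dist x p * dist x q)"

lemma cmp_angle_eq_arccos: "cmp_angle x p q = arccos (cmp_cos x p q)"
  unfolding cmp_angle_def cmp_cos_def ..

lemma cmp_cos_commute: "cmp_cos x p q = cmp_cos x q p"
  unfolding cmp_cos_def by (simp add: dist_commute ac_simps)

lemma cmp_cos_mult:
  fixes x p q :: "'a::metric_space"
  assumes "p \<noteq> x" "q \<noteq> x"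
  shows "2 * dist x p * dist x q * cmp_cos x p q = (dist x p)\<^sup>2 + (dist x q)\<^sup>2 - (dist p q)\<^sup>2"
  using assms unfolding cmp_cos_def by simp

lemma cmp_cos_bounds:
  fixes x p q :: "'a::metric_space"
  assumes "p \<noteq> x" "q \<noteq> x"
  shows "-1 \<le> cmp_cos x p q" "cmp_cos x p q \<le> 1"
proof -
  define a b c where "a = dist x p" and "b = dist x q" and "c = dist p q"
  have pos: "a > 0" "b > 0" using assms unfolding a_def b_def by auto
  have "c \<le> a + b" "\<bar>a - b\<bar> \<le> c"
    unfolding a_def b_def c_def by (metis dist_commute dist_triangle, smt (verit) dist_commute dist_triangle)
  then have "c\<^sup>2 \<le> (a + b)\<^sup>2" "(a - b)\<^sup>2 \<le> c\<^sup>2"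
    using power_mono[of "\<bar>a - b\<bar>" c 2] by (auto intro: power_mono)
  then have "-(2 * a * b) \<le> a\<^sup>2 + b\<^sup>2 - c\<^sup>2" "a\<^sup>2 + b\<^sup>2 - c\<^sup>2 \<le> 2 * a * b"
    by (simp_all add: power2_eq_square algebra_simps)
  with pos show "-1 \<le> cmp_cos x p q" "cmp_cos x p q \<le> 1"
    unfolding cmp_cos_def a_def [symmetric] b_def [symmetric] c_def [symmetric]
    by (simp_all add: field_simps)
qed

lemma cmp_angle_bounds:
  fixes x p q :: "'a::metric_space"
  assumes "p \<noteq> x" "q \<noteq> x"
  shows "0 \<le> cmp_angle x p q" "cmp_angle x p q \<le> pi"
  unfolding cmp_angle_eq_arccos using cmp_cos_bounds [OF assms]
  by (auto intro!: arccos_lbound arccos_ubound)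

lemma cmp_angle_less_iff:
  fixes x p q :: "'a::metric_space"
  assumes "p \<noteq> x" "q \<noteq> x" "0 \<le> \<beta>" "\<beta> \<le> pi"
  shows "cmp_angle x p q < \<beta> \<longleftrightarrow>
    (dist p q)\<^sup>2 < (dist x p)\<^sup>2 + (dist x q)\<^sup>2 - 2 * dist x p * dist x q * cos \<beta>"
proof -
  have pos: "0 < 2 * dist x p * dist x q" using assms by simp
  have "cmp_angle x p q < \<beta> \<longleftrightarrow> arccos (cmp_cos x p q) < arccos (cos \<beta>)"
    using assms by (simp add: cmp_angle_eq_arccos arccos_cos)
  also have "\<dots> \<longleftrightarrow> cos \<beta> < cmp_cos x p q"
    using cmp_cos_bounds [OF assms(1,2)] by (intro arccos_less_mono) auto
  also have "\<dots> \<longleftrightarrow> 2 * dist x p * dist x q * cos \<beta> < 2 * dist x p * dist x q * cmp_cos x p q"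
    by (rule mult_less_cancel_left_pos [OF pos, symmetric])
  finally show ?thesis
    unfolding cmp_cos_mult [OF assms(1,2)] by linarith
qed

lemma law_of_cosines_half_angles:
  fixes s h \<rho> :: real
  assumes "cos \<rho> \<noteq> 0"
  shows "s\<^sup>2 + (s * cos h / cos \<rho>)\<^sup>2 - 2 * s * (s * cos h / cos \<rho>) * cos (h + \<rho>)
    = (s * sin (h + \<rho>) / cos \<rho>)\<^sup>2"
proof -
  have "(cos \<rho>)\<^sup>2 + (cos h)\<^sup>2 - 2 * cos h * cos \<rho> * cos (h + \<rho>) = (sin (h + \<rho>))\<^sup>2"
    unfolding cos_add sin_add using sin_cos_squared_add [of h] sin_cos_squared_add [of \<rho>]
    by algebra
  then have "s\<^sup>2 * ((cos \<rho>)\<^sup>2 + (cos h)\<^sup>2 - 2 * cos h * cos \<rho> * cos (h + \<rho>))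
      = s\<^sup>2 * (sin (h + \<rho>))\<^sup>2"
    by simp
  with assms show ?thesis by (simp add: field_simps power2_eq_square)
qed

text \<open>The distance of p2 places it, in the Euclidean comparison picture, on the chord from p1 to
  p3; the triangle inequality for p1, p2, p3 then bounds the comparison angle at x.\<close>
lemma cmp_angle_add_less:
  fixes x p1 p2 p3 :: "'a::metric_space"
  assumes h: "0 < h" "h < pi / 2" and \<rho>: "\<bar>\<rho>\<bar> < h" and s: "0 < s"
    and d: "dist x p1 = s" "dist x p2 = s * cos h / cos \<rho>" "dist x p3 = s"
    and a12: "cmp_angle x p1 p2 < h + \<rho>" and a23: "cmp_angle x p2 p3 < h - \<rho>"
  shows "cmp_angle x p1 p3 < 2 * h"
proof -
  have "cos h \<le> cos \<bar>\<rho>\<bar>" using \<rho> h by (intro cos_monotone_0_pi_le) auto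
  moreover have ch: "cos h > 0" using h by (intro cos_gt_zero_pi) auto
  ultimately have cr: "cos \<rho> > 0" by simp
  define t where "t = s * cos h / cos \<rho>"
  have t: "t > 0" using s ch cr unfolding t_def by simp
  have ne: "p1 \<noteq> x" "p2 \<noteq> x" "p3 \<noteq> x" using d s t unfolding t_def [symmetric] by auto
  have range: "0 \<le> h + \<rho>" "h + \<rho> \<le> pi" "0 \<le> h - \<rho>" "h - \<rho> \<le> pi" "2 * h \<le> pi"
    using h \<rho> by (auto simp: abs_less_iff)
  have "sin (h + \<rho>) \<ge> 0" "sin (h - \<rho>) \<ge> 0" using range by (auto intro!: sin_ge_zero)
  then have nonneg: "0 \<le> s * sin (h + \<rho>) / cos \<rho>" "0 \<le> s * sin (h - \<rho>) / cos \<rho>"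
    using s cr by simp_all
  have "(dist p1 p2)\<^sup>2 < s\<^sup>2 + t\<^sup>2 - 2 * s * t * cos (h + \<rho>)"
    using a12 cmp_angle_less_iff [OF ne(1,2) range(1,2)] unfolding d t_def [symmetric] by blast
  also have "\<dots> = (s * sin (h + \<rho>) / cos \<rho>)\<^sup>2"
    unfolding t_def using law_of_cosines_half_angles cr by simp
  finally have d12: "dist p1 p2 < s * sin (h + \<rho>) / cos \<rho>"
    by (rule power2_less_imp_less [OF _ nonneg(1)])
  have "(dist p2 p3)\<^sup>2 < t\<^sup>2 + s\<^sup>2 - 2 * t * s * cos (h - \<rho>)"
    using a23 cmp_angle_less_iff [OF ne(2,3) range(3,4)] unfolding d t_def [symmetric] by blast
  also have "\<dots> = (s * sin (h - \<rho>) / cos \<rho>)\<^sup>2"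
    using law_of_cosines_half_angles [of "- \<rho>" s h] cr unfolding t_def by (simp add: algebra_simps)
  finally have d23: "dist p2 p3 < s * sin (h - \<rho>) / cos \<rho>"
    by (rule power2_less_imp_less [OF _ nonneg(2)])
  have "s * sin (h + \<rho>) / cos \<rho> + s * sin (h - \<rho>) / cos \<rho> = 2 * s * sin h"
    using cr by (simp add: sin_add sin_diff add_divide_distrib [symmetric] algebra_simps)
  then have "dist p1 p3 < 2 * s * sin h"
    using d12 d23 dist_triangle [of p1 p3 p2] by linarith
  then have "(dist p1 p3)\<^sup>2 < (2 * s * sin h)\<^sup>2"
    by (intro power_strict_mono) auto
  also have "\<dots> = s\<^sup>2 + s\<^sup>2 - 2 * s * s * cos (2 * h)"
    unfolding cos_double_sin by (simp add: power2_eq_square algebra_simps)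
  finally show ?thesis
    using cmp_angle_less_iff [OF ne(1,3), of "2 * h"] range(5) h unfolding d by simp
qed

section \<open>Tangent vectors\<close>

lemma tinner_tscale: "tinner (tscale r u) w = r * tinner u w"
  unfolding tinner_def tscale_def tangle_def tnorm_def tbase_def tdir_def by simp

lemma tnorm_tlog: "tnorm (tlog z a) = dist z a"
  unfolding tlog_def tnorm_def tzero_def by auto

lemma tnorm_nonneg: "u \<in> T z \<Longrightarrow> 0 \<le> tnorm u"
  unfolding T_def tnorm_def by auto

lemma tbase_T: "u \<in> T z \<Longrightarrow> tbase u = z"
  unfolding T_def tbase_def by auto

lemma dirseq_tdir: "u \<in> T z \<Longrightarrow> 0 < tnorm u \<Longrightarrow> dirseq z (tdir u)"
  unfolding T_def tnorm_def tdir_def by auto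

lemma tscale_in_T: "u \<in> T z \<Longrightarrow> 0 < r \<Longrightarrow> tscale r u \<in> T z"
  unfolding T_def tscale_def tnorm_def tbase_def tdir_def by auto

lemma tzero_in_T: "tzero z \<in> T z"
  unfolding tzero_def T_def by simp

lemma dirseq_neq: "dirseq z us \<Longrightarrow> us k \<noteq> z"
  unfolding dirseq_def by auto

lemma tinner_abs_le: "\<bar>tinner u w\<bar> \<le> \<bar>tnorm u\<bar> * \<bar>tnorm w\<bar>"
proof -
  have "\<bar>tinner u w\<bar> = \<bar>tnorm u\<bar> * \<bar>tnorm w\<bar> * \<bar>cos (tangle u w)\<bar>"
    unfolding tinner_def by (simp add: abs_mult)
  also have "\<dots> \<le> \<bar>tnorm u\<bar> * \<bar>tnorm w\<bar>"
    by (simp add: mult_left_le)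
  finally show ?thesis .
qed

lemma tinner_tnorm_zero [simp]:
  "tnorm u = 0 \<Longrightarrow> tinner u w = 0" "tnorm w = 0 \<Longrightarrow> tinner u w = 0"
  unfolding tinner_def by simp_all

lemma tinner_tlog_self [simp]: "tinner u (tlog z z) = 0"
  by (simp add: tnorm_tlog)

lemma abs_tinner_tlog_le: "u \<in> T z \<Longrightarrow> \<bar>tinner u (tlog z a)\<bar> \<le> tnorm u * dist z a"
  using tinner_abs_le [of u "tlog z a"] tnorm_nonneg [of u z] by (simp add: tnorm_tlog)

lemma tdist_sq:
  assumes "0 \<le> tnorm u" "0 \<le> tnorm w"
  shows "(tdist u w)\<^sup>2 = (tnorm u)\<^sup>2 + (tnorm w)\<^sup>2 - 2 * tinner u w"
proof -
  have "tinner u w \<le> tnorm u * tnorm w" using tinner_abs_le [of u w] assms by simp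
  then have "(tnorm u - tnorm w)\<^sup>2 \<le> (tnorm u)\<^sup>2 + (tnorm w)\<^sup>2 - 2 * tinner u w"
    by (simp add: power2_eq_square algebra_simps)
  then have "0 \<le> (tnorm u)\<^sup>2 + (tnorm w)\<^sup>2 - 2 * tinner u w"
    by (smt (verit) zero_le_power2)
  then show ?thesis unfolding tdist_def by simp
qed

lemma tdist_tzero: "u \<in> T z \<Longrightarrow> tdist u (tzero z) = tnorm u"
  unfolding tdist_def tinner_def tzero_def tnorm_def T_def by auto

lemma polar_diff_le:
  fixes ra rb \<theta>a \<theta>b \<gamma> d :: real
  assumes "0 \<le> ra" "0 \<le> rb" "0 \<le> d" "cos \<gamma> \<le> cos (\<theta>a - \<theta>b)"
    and "ra\<^sup>2 + rb\<^sup>2 - 2 * ra * rb * cos \<gamma> \<le> d\<^sup>2"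
  shows "ra * cos \<theta>a - rb * cos \<theta>b \<le> d"
proof -
  have ring: "(r * c1 - q * c2)\<^sup>2 + (r * s1 - q * s2)\<^sup>2
      = r\<^sup>2 * (c1\<^sup>2 + s1\<^sup>2) + q\<^sup>2 * (c2\<^sup>2 + s2\<^sup>2) - 2 * r * q * (c1 * c2 + s1 * s2)"
    for r q c1 c2 s1 s2 :: real
    by (simp add: power2_eq_square algebra_simps)
  have "(ra * cos \<theta>a - rb * cos \<theta>b)\<^sup>2
      \<le> (ra * cos \<theta>a - rb * cos \<theta>b)\<^sup>2 + (ra * sin \<theta>a - rb * sin \<theta>b)\<^sup>2"
    by simp
  also have "\<dots> = ra\<^sup>2 + rb\<^sup>2 - 2 * ra * rb * cos (\<theta>a - \<theta>b)"
    unfolding ring cos_diff by simp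
  also have "\<dots> \<le> ra\<^sup>2 + rb\<^sup>2 - 2 * ra * rb * cos \<gamma>"
    using mult_left_mono [OF assms(4), of "2 * ra * rb"] assms(1,2) by simp
  also have "\<dots> \<le> d\<^sup>2" by (rule assms(5))
  finally show ?thesis by (rule power2_le_imp_le [OF _ assms(3)])
qed

lemma strongly_monotone_imp_monotone:
  assumes "strongly_monotone_vf A \<alpha>"
  shows "monotone_vf A"
  unfolding monotone_vf_def
proof (intro conjI allI impI)
  show "vfield A" using assms unfolding strongly_monotone_vf_def by blast
  fix x y u v assume "u \<in> A x" "v \<in> A y"
  then have "tinner u (tlog x y) \<le> - tinner v (tlog y x) - \<alpha> * (dist x y)\<^sup>2"
    using assms unfolding strongly_monotone_vf_def by blast
  moreover have "0 \<le> \<alpha> * (dist x y)\<^sup>2"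
    using assms unfolding strongly_monotone_vf_def by simp
  ultimately show "tinner u (tlog x y) \<le> - tinner v (tlog y x)" by linarith
qed

section \<open>Elementary real inequalities\<close>

lemma shift_sq_le:
  fixes l D0 D1 \<delta> :: real
  assumes l: "0 < l" and nn: "0 \<le> D1" "0 \<le> \<delta>" "0 \<le> D0" and tri: "D0 \<le> D1 + \<delta>"
  shows "2 * l * D0\<^sup>2 \<le> 2 * l * D1\<^sup>2 + \<delta>\<^sup>2 / 2 + 8 * l\<^sup>2 * D0\<^sup>2"
proof (cases "4 * l \<ge> 1")
  case True
  have "2 * l * D0\<^sup>2 * (1 - 4 * l) \<le> 0"
    using True l by (intro mult_nonneg_nonpos) auto
  moreover have "2 * l * D0\<^sup>2 - 8 * l\<^sup>2 * D0\<^sup>2 = 2 * l * D0\<^sup>2 * (1 - 4 * l)"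
    by (simp add: power2_eq_square algebra_simps)
  moreover have "0 \<le> 2 * l * D1\<^sup>2 + \<delta>\<^sup>2 / 2" using l by simp
  ultimately show ?thesis by linarith
next
  case False
  have "D0\<^sup>2 \<le> (D1 + \<delta>)\<^sup>2" using tri nn by (intro power_mono) auto
  moreover have "4 * l * (D1 + \<delta>)\<^sup>2 \<le> (1 + 4 * l) * (4 * l * D1\<^sup>2 + \<delta>\<^sup>2)"
    using zero_le_power2 [of "4 * l * D1 - \<delta>"] by (simp add: power2_eq_square algebra_simps)
  ultimately have "4 * l * D0\<^sup>2 \<le> (1 + 4 * l) * (4 * l * D1\<^sup>2 + \<delta>\<^sup>2)"
    using l by (smt (verit) mult_left_mono)
  then have "(1 - 4 * l) * (4 * l * D0\<^sup>2) \<le> (1 - 4 * l) * ((1 + 4 * l) * (4 * l * D1\<^sup>2 + \<delta>\<^sup>2))"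
    using False by (intro mult_left_mono) auto
  also have "\<dots> = (1 - 16 * l\<^sup>2) * (4 * l * D1\<^sup>2 + \<delta>\<^sup>2)" by (simp add: power2_eq_square algebra_simps)
  also have "\<dots> \<le> 4 * l * D1\<^sup>2 + \<delta>\<^sup>2"
  proof -
    have "0 \<le> 16 * l\<^sup>2 * (4 * l * D1\<^sup>2 + \<delta>\<^sup>2)" using l by simp
    then show ?thesis by (simp add: algebra_simps)
  qed
  finally show ?thesis by (simp add: power2_eq_square algebra_simps)
qed

text \<open>In the application D0, D1 and \<delta> are d(x, xs), d(J x, xs) and d(x, J x), I is the inner
  product of log x and log xs at J x, and g, g' are the inner products of phi with log x and
  log (J x) at xs.\<close>
lemma proximal_step_real:
  fixes l a D0 D1 \<delta> I g g' p :: real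
  assumes l: "0 < l" and a: "0 < a" "a \<le> 1" and nn: "0 \<le> D1" "0 \<le> \<delta>" "0 \<le> D0" "0 \<le> p"
    and tri: "D0 \<le> D1 + \<delta>"
    and sm: "I / l \<le> - g' - a * D1\<^sup>2"
    and lc: "\<delta>\<^sup>2 + D1\<^sup>2 - D0\<^sup>2 \<le> 2 * I"
    and lip: "g - g' \<le> p * \<delta>"
  shows "D1\<^sup>2 + 2 * l * a * D0\<^sup>2 \<le> (1 + 8 * l\<^sup>2) * D0\<^sup>2 - 2 * l * g + 2 * l\<^sup>2 * p\<^sup>2"
    and "D1\<^sup>2 \<le> D0\<^sup>2 - 2 * l * g + 2 * l\<^sup>2 * p\<^sup>2"
proof -
  have "I \<le> l * (- g' - a * D1\<^sup>2)" using sm l by (simp add: field_simps)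
  also have "\<dots> \<le> l * (- g + p * \<delta> - a * D1\<^sup>2)" using lip l by (intro mult_left_mono) auto
  finally have "\<delta>\<^sup>2 + D1\<^sup>2 - D0\<^sup>2 \<le> 2 * l * (- g + p * \<delta> - a * D1\<^sup>2)" using lc by linarith
  moreover have "2 * l * p * \<delta> \<le> \<delta>\<^sup>2 / 2 + 2 * l\<^sup>2 * p\<^sup>2"
    using zero_le_power2 [of "\<delta> - 2 * l * p"] by (simp add: power2_eq_square algebra_simps)
  ultimately have main: "D1\<^sup>2 + 2 * l * a * D1\<^sup>2 + \<delta>\<^sup>2 / 2 \<le> D0\<^sup>2 - 2 * l * g + 2 * l\<^sup>2 * p\<^sup>2"
    by (simp add: algebra_simps)
  have "0 \<le> 2 * l * a * D1\<^sup>2" using l a by simp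
  then show "D1\<^sup>2 \<le> D0\<^sup>2 - 2 * l * g + 2 * l\<^sup>2 * p\<^sup>2" using main zero_le_power2 [of \<delta>] by linarith
  have "a * (2 * l * D0\<^sup>2) \<le> a * (2 * l * D1\<^sup>2 + \<delta>\<^sup>2 / 2 + 8 * l\<^sup>2 * D0\<^sup>2)"
    using shift_sq_le [OF l nn(1-3) tri] a by (intro mult_left_mono) auto
  moreover have "a * (\<delta>\<^sup>2 / 2) \<le> \<delta>\<^sup>2 / 2" "a * (8 * l\<^sup>2 * D0\<^sup>2) \<le> 8 * l\<^sup>2 * D0\<^sup>2"
    using a by (simp_all add: mult_left_le_one_le)
  ultimately have "2 * l * a * D0\<^sup>2 \<le> 2 * l * a * D1\<^sup>2 + \<delta>\<^sup>2 / 2 + 8 * l\<^sup>2 * D0\<^sup>2"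
    by (simp add: algebra_simps)
  with main show "D1\<^sup>2 + 2 * l * a * D0\<^sup>2 \<le> (1 + 8 * l\<^sup>2) * D0\<^sup>2 - 2 * l * g + 2 * l\<^sup>2 * p\<^sup>2"
    by (simp add: algebra_simps)
qed

lemma less_of_sq_le:
  fixes D r e \<epsilon> :: real
  assumes "0 \<le> D" "0 \<le> r" "0 \<le> e" "e < 1" "e < \<epsilon> / 2" "e < \<epsilon>\<^sup>2 / (4 * (r + 1))"
    and "D\<^sup>2 \<le> e * (2 * r + 2 * e + D)"
  shows "D < \<epsilon>"
proof (rule ccontr)
  assume "\<not> D < \<epsilon>"
  then have De: "\<epsilon> \<le> D" by simp
  have ep: "\<epsilon> > 0" using assms by linarith
  have "e * D \<le> (\<epsilon> / 2) * D" using assms by (intro mult_right_mono) auto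
  also have "\<dots> \<le> D\<^sup>2 / 2" using De ep assms(1) by (simp add: power2_eq_square mult_right_mono)
  finally have "e * D \<le> D\<^sup>2 / 2" .
  moreover have "e * (2 * r + 2 * e) \<le> e * (2 * r + 2)" using assms by (intro mult_left_mono) auto
  ultimately have "D\<^sup>2 \<le> e * (2 * r + 2) + D\<^sup>2 / 2" using assms(7) by (simp add: algebra_simps)
  then have "D\<^sup>2 \<le> 4 * e * (r + 1)" by (simp add: algebra_simps)
  also have "\<dots> < \<epsilon>\<^sup>2" using assms(2,6) by (simp add: field_simps)
  also have "\<dots> \<le> D\<^sup>2" using De ep by (intro power_mono) auto
  finally show False by simp
qed

section \<open>Geodesics and Alexandrov angles in Hadamard spaces\<close>

definition geod_cmp_angle :: "'a::metric_space \<Rightarrow> 'a \<Rightarrow> 'a \<Rightarrow> real \<Rightarrow> real \<Rightarrow> real" where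
  "geod_cmp_angle x y z s t = cmp_angle x (gpt x y s) (gpt x z t)"

definition geod_cmp_angles :: "'a::metric_space \<Rightarrow> 'a \<Rightarrow> 'a \<Rightarrow> real set" where
  "geod_cmp_angles x y z =
     (\<lambda>(s, t). geod_cmp_angle x y z s t) ` ({0<..dist x y} \<times> {0<..dist x z})"

context
  assumes hadamard: "hadamard TYPE('a::complete_space)"
begin

lemma geodesic_exists: "\<exists>\<gamma>. is_geodesic \<gamma> (dist x y) \<and> \<gamma> 0 = x \<and> \<gamma> (dist x y) = (y::'a)"
  using hadamard unfolding hadamard_def by blast

lemma cat0_geodesic:
  fixes \<gamma> :: "real \<Rightarrow> 'a"
  assumes "is_geodesic \<gamma> l" "0 \<le> t" "t \<le> 1"
  shows "(dist (\<gamma> (t * l)) q)\<^sup>2 \<le> (1 - t) * (dist (\<gamma> 0) q)\<^sup>2 + t * (dist (\<gamma> l) q)\<^sup>2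
           - t * (1 - t) * (dist (\<gamma> 0) (\<gamma> l))\<^sup>2"
  using hadamard assms unfolding hadamard_def by auto

lemma dist_geodesic:
  assumes "is_geodesic \<gamma> l" "s \<in> {0..l}" "t \<in> {0..l}"
  shows "dist (\<gamma> s) (\<gamma> t) = \<bar>s - t\<bar>"
  using assms unfolding is_geodesic_def by blast

lemma geodesic_point_unique:
  fixes x y p :: 'a
  assumes g: "is_geodesic \<gamma> (dist x y)" "\<gamma> 0 = x" "\<gamma> (dist x y) = y"
    and s: "0 \<le> s" "s \<le> dist x y"
    and p: "dist x p = s" "dist p y = dist x y - s"
  shows "p = \<gamma> s"
proof (cases "x = y")
  case True
  then show ?thesis using s p g by auto
next
  case False
  define d where "d = dist x y"
  define t where "t = s / d"
  have d: "d > 0" using False unfolding d_def by simp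
  have t: "0 \<le> t" "t \<le> 1" "t * d = s" using s d unfolding t_def d_def by auto
  have "(dist (\<gamma> (t * d)) p)\<^sup>2 \<le> (1 - t) * s\<^sup>2 + t * (d - s)\<^sup>2 - t * (1 - t) * d\<^sup>2"
    using cat0_geodesic [OF g(1) t(1,2), of p] g p unfolding d_def by (simp add: dist_commute)
  also have "\<dots> = 0"
    unfolding t(3) [symmetric] by (simp add: algebra_simps power2_eq_square)
  finally show ?thesis using t(3) by simp
qed

lemma gpt_eq_geodesic:
  fixes x y :: 'a
  assumes g: "is_geodesic \<gamma> (dist x y)" "\<gamma> 0 = x" "\<gamma> (dist x y) = y"
    and s: "0 \<le> s" "s \<le> dist x y"
  shows "gpt x y s = \<gamma> s"
  unfolding gpt_def
proof (rule the_equality)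
  show "dist x (\<gamma> s) = s \<and> dist (\<gamma> s) y = dist x y - s"
    using dist_geodesic [OF g(1), of 0 s] dist_geodesic [OF g(1), of s "dist x y"] g s by auto
qed (use geodesic_point_unique [OF g s] in blast)

lemma dist_gpt:
  fixes x y :: 'a
  assumes "0 \<le> s" "s \<le> dist x y"
  shows "dist x (gpt x y s) = s" "dist (gpt x y s) y = dist x y - s"
proof -
  obtain \<gamma> where g: "is_geodesic \<gamma> (dist x y)" "\<gamma> 0 = x" "\<gamma> (dist x y) = y"
    using geodesic_exists by blast
  show "dist x (gpt x y s) = s" "dist (gpt x y s) y = dist x y - s"
    unfolding gpt_eq_geodesic [OF g assms]
    using dist_geodesic [OF g(1), of 0 s] dist_geodesic [OF g(1), of s "dist x y"] g assms by auto
qed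

lemma dist_gpt_gpt:
  fixes x y :: 'a
  assumes "0 \<le> s" "s \<le> s'" "s' \<le> dist x y"
  shows "dist (gpt x y s) (gpt x y s') = s' - s"
proof -
  obtain \<gamma> where g: "is_geodesic \<gamma> (dist x y)" "\<gamma> 0 = x" "\<gamma> (dist x y) = y"
    using geodesic_exists by blast
  have "gpt x y s = \<gamma> s" "gpt x y s' = \<gamma> s'" using gpt_eq_geodesic [OF g] assms by auto
  then show ?thesis using dist_geodesic [OF g(1), of s s'] assms by auto
qed

lemma gpt_eqI:
  fixes x y p :: 'a
  assumes "0 \<le> s" "s \<le> dist x y" "dist x p = s" "dist p y = dist x y - s"
  shows "gpt x y s = p"
proof -
  obtain \<gamma> where g: "is_geodesic \<gamma> (dist x y)" "\<gamma> 0 = x" "\<gamma> (dist x y) = y"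
    using geodesic_exists by blast
  show ?thesis using gpt_eq_geodesic [OF g assms(1,2)] geodesic_point_unique [OF g assms] by simp
qed

lemma gpt_dist: "gpt x y (dist x y) = (y::'a)"
  by (rule gpt_eqI) auto

lemma gpt_neq:
  fixes x y :: 'a
  assumes "0 < s" "s \<le> dist x y"
  shows "gpt x y s \<noteq> x"
  using dist_gpt(1) [of s x y] assms by auto

lemma gpt_gpt:
  fixes x y :: 'a
  assumes "0 \<le> s" "s \<le> s'" "s' \<le> dist x y"
  shows "gpt x (gpt x y s') s = gpt x y s"
  using assms dist_gpt [of s x y] dist_gpt [of s' x y] dist_gpt_gpt [OF assms]
  by (intro gpt_eqI) auto

lemma cat0_gpt:
  fixes x y q :: 'a
  assumes "0 \<le> t" "t \<le> 1"
  shows "(dist (gpt x y (t * dist x y)) q)\<^sup>2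
    \<le> (1 - t) * (dist x q)\<^sup>2 + t * (dist y q)\<^sup>2 - t * (1 - t) * (dist x y)\<^sup>2"
proof -
  obtain \<gamma> where g: "is_geodesic \<gamma> (dist x y)" "\<gamma> 0 = x" "\<gamma> (dist x y) = y"
    using geodesic_exists by blast
  have "gpt x y (t * dist x y) = \<gamma> (t * dist x y)"
    using assms by (intro gpt_eq_geodesic [OF g]) (auto simp: mult_left_le_one_le)
  then show ?thesis using cat0_geodesic [OF g(1) assms, of q] g by simp
qed

text \<open>Comparison angles shrink as the points approach x along the geodesics;
  this is where the CAT(0) inequality enters.\<close>
lemma cmp_cos_gpt_antimono:
  fixes x y q :: 'a
  assumes q: "q \<noteq> x" and s: "0 < s" "s \<le> s'" "s' \<le> dist x y"
  shows "cmp_cos x (gpt x y s') q \<le> cmp_cos x (gpt x y s) q"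
proof -
  define y' where "y' = gpt x y s'"
  define \<tau> where "\<tau> = s / s'"
  define r where "r = dist x q"
  have dy': "dist x y' = s'" unfolding y'_def using dist_gpt s by auto
  have ds: "dist x (gpt x y s) = s" using dist_gpt s by auto
  have \<tau>: "0 < \<tau>" "\<tau> \<le> 1" "s = \<tau> * s'" using s unfolding \<tau>_def by auto
  have r: "r > 0" using q unfolding r_def by simp
  have "gpt x y' (\<tau> * dist x y') = gpt x y s"
    using gpt_gpt [of s s' x y] s dy' \<tau>(3) [symmetric] unfolding y'_def by simp
  then have "(dist (gpt x y s) q)\<^sup>2 \<le> (1 - \<tau>) * r\<^sup>2 + \<tau> * (dist y' q)\<^sup>2 - \<tau> * (1 - \<tau>) * s'\<^sup>2"
    using cat0_gpt [of \<tau> x y' q] \<tau> unfolding dy' r_def by simp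
  then have num: "\<tau> * (s'\<^sup>2 + r\<^sup>2 - (dist y' q)\<^sup>2) \<le> s\<^sup>2 + r\<^sup>2 - (dist (gpt x y s) q)\<^sup>2"
    unfolding \<tau>(3) by (simp add: algebra_simps power2_eq_square)
  have "cmp_cos x y' q = \<tau> * (s'\<^sup>2 + r\<^sup>2 - (dist y' q)\<^sup>2) / (2 * s * r)"
    unfolding cmp_cos_def dy' r_def [symmetric] \<tau>(3) using \<tau> by simp
  also have "\<dots> \<le> (s\<^sup>2 + r\<^sup>2 - (dist (gpt x y s) q)\<^sup>2) / (2 * s * r)"
    using num s r by (intro divide_right_mono) auto
  also have "\<dots> = cmp_cos x (gpt x y s) q" unfolding cmp_cos_def ds r_def ..
  finally show ?thesis unfolding y'_def .
qed

lemma geod_cmp_angle_mono: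
  fixes x y z :: 'a
  assumes s: "0 < s" "s \<le> s'" "s' \<le> dist x y" and t: "0 < t" "t \<le> t'" "t' \<le> dist x z"
  shows "geod_cmp_angle x y z s t \<le> geod_cmp_angle x y z s' t'"
proof -
  have ne: "gpt x y s \<noteq> x" "gpt x y s' \<noteq> x" "gpt x z t \<noteq> x" "gpt x z t' \<noteq> x"
    using gpt_neq s t by auto
  have "cmp_cos x (gpt x y s') (gpt x z t') \<le> cmp_cos x (gpt x y s) (gpt x z t')"
    using cmp_cos_gpt_antimono [OF ne(4) s] .
  also have "\<dots> \<le> cmp_cos x (gpt x y s) (gpt x z t)"
    using cmp_cos_gpt_antimono [OF ne(1) t] by (simp add: cmp_cos_commute)
  finally show ?thesis
    unfolding geod_cmp_angle_def cmp_angle_eq_arccos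
    using cmp_cos_bounds [OF ne(2,4)] cmp_cos_bounds [OF ne(1,3)] by (intro arccos_le_arccos) auto
qed

lemma geod_cmp_angle_in_geod_cmp_angles:
  "0 < s \<Longrightarrow> s \<le> dist x y \<Longrightarrow> 0 < t \<Longrightarrow> t \<le> dist x z
    \<Longrightarrow> geod_cmp_angle x y z s t \<in> geod_cmp_angles x y z"
  unfolding geod_cmp_angles_def by force

lemma geod_cmp_anglesE:
  assumes "v \<in> geod_cmp_angles x y z"
  obtains s t where "0 < s" "s \<le> dist x y" "0 < t" "t \<le> dist x z" "v = geod_cmp_angle x y z s t"
  using assms that unfolding geod_cmp_angles_def by auto

lemma geod_cmp_angles_nonneg:
  fixes x y z :: 'a
  assumes "v \<in> geod_cmp_angles x y z"
  shows "0 \<le> v"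
  using assms
proof (rule geod_cmp_anglesE)
  fix s t assume "0 < s" "s \<le> dist x y" "0 < t" "t \<le> dist x z" "v = geod_cmp_angle x y z s t"
  then show "0 \<le> v" unfolding geod_cmp_angle_def by (simp add: cmp_angle_bounds gpt_neq)
qed

lemma bdd_below_geod_cmp_angles:
  fixes x y z :: 'a
  shows "bdd_below (geod_cmp_angles x y z)"
  by (rule bdd_belowI [of _ 0]) (rule geod_cmp_angles_nonneg)

lemma Inf_geod_cmp_angles_less:
  fixes x y z :: 'a
  assumes "y \<noteq> x" "z \<noteq> x" "Inf (geod_cmp_angles x y z) < a"
  obtains s t where "0 < s" "s \<le> dist x y" "0 < t" "t \<le> dist x z" "geod_cmp_angle x y z s t < a"
proof -
  have "geod_cmp_angle x y z (dist x y) (dist x z) \<in> geod_cmp_angles x y z"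
    using assms by (intro geod_cmp_angle_in_geod_cmp_angles) auto
  then obtain v where "v \<in> geod_cmp_angles x y z" "v < a"
    using cInf_lessD [OF _ assms(3)] by blast
  then show ?thesis using that by (auto elim: geod_cmp_anglesE)
qed

lemma alex_angle_eq_Inf:
  fixes x y z :: 'a
  assumes y: "y \<noteq> x" and z: "z \<noteq> x"
  shows "alex_angle x y z = Inf (geod_cmp_angles x y z)"
proof -
  let ?F = "\<lambda>(s, t). geod_cmp_angle x y z s t" and ?L = "Inf (geod_cmp_angles x y z)"
  have dpos: "dist x y > 0" "dist x z > 0" using y z by auto
  have "(?F \<longlongrightarrow> ?L) (at_right 0 \<times>\<^sub>F at_right 0)"
  proof (rule order_tendstoI)
    fix a assume a: "a < ?L"
    have lower: "a < geod_cmp_angle x y z s t"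
      if "0 < s" "s < dist x y" "0 < t" "t < dist x z" for s t
      using a cInf_lower [OF geod_cmp_angle_in_geod_cmp_angles bdd_below_geod_cmp_angles] that
      by (smt (verit))
    show "\<forall>\<^sub>F st in at_right 0 \<times>\<^sub>F at_right 0. a < ?F st"
      unfolding eventually_prod_filter
    proof (intro exI conjI)
      show "eventually (\<lambda>s. s \<in> {0<..<dist x y}) (at_right 0)"
        by (rule eventually_at_right_real [OF dpos(1)])
      show "eventually (\<lambda>t. t \<in> {0<..<dist x z}) (at_right 0)"
        by (rule eventually_at_right_real [OF dpos(2)])
    qed (use lower in auto)
  next
    fix a assume "?L < a"
    then obtain s0 t0 where st0: "0 < s0" "s0 \<le> dist x y" "0 < t0" "t0 \<le> dist x z"
        "geod_cmp_angle x y z s0 t0 < a"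
      using Inf_geod_cmp_angles_less [OF y z] by blast
    have upper: "geod_cmp_angle x y z s t < a" if "0 < s" "s < s0" "0 < t" "t < t0" for s t
      using geod_cmp_angle_mono [of s s0 x y t t0 z] st0 that by fastforce
    show "\<forall>\<^sub>F st in at_right 0 \<times>\<^sub>F at_right 0. ?F st < a"
      unfolding eventually_prod_filter
    proof (intro exI conjI)
      show "eventually (\<lambda>s. s \<in> {0<..<s0}) (at_right 0)"
        by (rule eventually_at_right_real [OF st0(1)])
      show "eventually (\<lambda>t. t \<in> {0<..<t0}) (at_right 0)"
        by (rule eventually_at_right_real [OF st0(3)])
    qed (use upper in auto)
  qed
  then have "Lim (at_right 0 \<times>\<^sub>F at_right 0) ?F = ?L"
    by (intro tendsto_Lim) (simp_all add: prod_filter_eq_bot)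
  then show ?thesis unfolding alex_angle_def geod_cmp_angle_def .
qed

lemma alex_angle_le_geod_cmp_angle:
  fixes x y z :: 'a
  assumes "y \<noteq> x" "z \<noteq> x" "0 < s" "s \<le> dist x y" "0 < t" "t \<le> dist x z"
  shows "alex_angle x y z \<le> geod_cmp_angle x y z s t"
  unfolding alex_angle_eq_Inf [OF assms(1,2)]
  using geod_cmp_angle_in_geod_cmp_angles [OF assms(3-6)] bdd_below_geod_cmp_angles
  by (rule cInf_lower)

lemma alex_angle_nonneg:
  fixes x y z :: 'a
  assumes "y \<noteq> x" "z \<noteq> x"
  shows "0 \<le> alex_angle x y z"
proof -
  have "geod_cmp_angles x y z \<noteq> {}" using assms unfolding geod_cmp_angles_def by auto
  then show ?thesis
    unfolding alex_angle_eq_Inf [OF assms] using geod_cmp_angles_nonneg by (rule cInf_greatest)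
qed

lemma alex_angle_le_cmp_angle:
  fixes x y z :: 'a
  assumes "y \<noteq> x" "z \<noteq> x"
  shows "alex_angle x y z \<le> cmp_angle x y z"
  using alex_angle_le_geod_cmp_angle [OF assms, of "dist x y" "dist x z"] assms
  unfolding geod_cmp_angle_def gpt_dist by simp

lemma alex_angle_le_pi:
  fixes x y z :: 'a
  assumes "y \<noteq> x" "z \<noteq> x"
  shows "alex_angle x y z \<le> pi"
  using alex_angle_le_cmp_angle [OF assms] cmp_angle_bounds(2) [OF assms] by linarith

lemma alex_angle_commute:
  fixes x y z :: 'a
  assumes "y \<noteq> x" "z \<noteq> x"
  shows "alex_angle x y z = alex_angle x z y"
proof -
  have swap: "geod_cmp_angles x y' z' \<subseteq> geod_cmp_angles x z' y'" for y' z' :: 'a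
  proof
    fix v assume "v \<in> geod_cmp_angles x y' z'"
    then obtain s t where st: "0 < s" "s \<le> dist x y'" "0 < t" "t \<le> dist x z'"
        and "v = geod_cmp_angle x y' z' s t"
      by (rule geod_cmp_anglesE)
    then have "v = geod_cmp_angle x z' y' t s"
      unfolding geod_cmp_angle_def cmp_angle_eq_arccos by (simp add: cmp_cos_commute)
    then show "v \<in> geod_cmp_angles x z' y'" using geod_cmp_angle_in_geod_cmp_angles st by simp
  qed
  show ?thesis
    using alex_angle_eq_Inf assms swap [of y z] swap [of z y] by (metis subset_antisym)
qed

lemma alex_angle_self:
  fixes x y :: 'a
  assumes "y \<noteq> x"
  shows "alex_angle x y y = 0"
proof -
  have "geod_cmp_angle x y y (dist x y) (dist x y) = 0"
    using assms unfolding geod_cmp_angle_def cmp_angle_eq_arccos cmp_cos_def gpt_dist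
    by (simp add: power2_eq_square)
  then show ?thesis
    using alex_angle_le_geod_cmp_angle [OF assms assms, of "dist x y" "dist x y"]
      alex_angle_nonneg [OF assms assms] assms by simp
qed

lemma alex_angle_less_imp:
  fixes x y z :: 'a
  assumes y: "y \<noteq> x" and z: "z \<noteq> x" and less: "alex_angle x y z < \<beta>"
  obtains e where "0 < e" "e \<le> dist x y" "e \<le> dist x z"
    "\<And>s t. 0 < s \<Longrightarrow> s \<le> e \<Longrightarrow> 0 < t \<Longrightarrow> t \<le> e \<Longrightarrow> geod_cmp_angle x y z s t < \<beta>"
proof -
  obtain s0 t0 where st0: "0 < s0" "s0 \<le> dist x y" "0 < t0" "t0 \<le> dist x z"
      "geod_cmp_angle x y z s0 t0 < \<beta>"
    using Inf_geod_cmp_angles_less [OF y z] less unfolding alex_angle_eq_Inf [OF y z] by blast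
  show ?thesis
  proof (rule that [of "min s0 t0"])
    fix s t assume "0 < s" "s \<le> min s0 t0" "0 < t" "t \<le> min s0 t0"
    then show "geod_cmp_angle x y z s t < \<beta>"
      using geod_cmp_angle_mono [of s s0 x y t t0 z] st0 by fastforce
  qed (use st0 in auto)
qed

lemma dist_sq_ge_alex_angle:
  fixes x y z :: 'a
  assumes "y \<noteq> x" "z \<noteq> x"
  shows "(dist x y)\<^sup>2 + (dist x z)\<^sup>2 - 2 * dist x y * dist x z * cos (alex_angle x y z)
    \<le> (dist y z)\<^sup>2"
proof -
  have "cmp_cos x y z = cos (cmp_angle x y z)"
    unfolding cmp_angle_eq_arccos using cmp_cos_bounds [OF assms] by simp
  also have "\<dots> \<le> cos (alex_angle x y z)"
    using alex_angle_nonneg alex_angle_le_cmp_angle cmp_angle_bounds assms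
    by (intro cos_monotone_0_pi_le) auto
  finally have "2 * dist x y * dist x z * cmp_cos x y z
      \<le> 2 * dist x y * dist x z * cos (alex_angle x y z)"
    by (intro mult_left_mono) auto
  then show ?thesis unfolding cmp_cos_mult [OF assms] by linarith
qed

lemma alex_angle_less_add:
  fixes x y1 y2 y3 :: 'a
  assumes y: "y1 \<noteq> x" "y2 \<noteq> x" "y3 \<noteq> x"
    and \<beta>: "0 < \<beta>1" "0 < \<beta>2" "\<beta>1 + \<beta>2 < pi"
    and less: "alex_angle x y1 y2 < \<beta>1" "alex_angle x y2 y3 < \<beta>2"
  shows "alex_angle x y1 y3 < \<beta>1 + \<beta>2"
proof -
  obtain e1 where e1: "0 < e1" "e1 \<le> dist x y1" "e1 \<le> dist x y2"
      "\<And>s t. 0 < s \<Longrightarrow> s \<le> e1 \<Longrightarrow> 0 < t \<Longrightarrow> t \<le> e1 \<Longrightarrow> geod_cmp_angle x y1 y2 s t < \<beta>1"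
    using alex_angle_less_imp [OF y(1,2) less(1)] by blast
  obtain e2 where e2: "0 < e2" "e2 \<le> dist x y2" "e2 \<le> dist x y3"
      "\<And>s t. 0 < s \<Longrightarrow> s \<le> e2 \<Longrightarrow> 0 < t \<Longrightarrow> t \<le> e2 \<Longrightarrow> geod_cmp_angle x y2 y3 s t < \<beta>2"
    using alex_angle_less_imp [OF y(2,3) less(2)] by blast
  define s h \<rho> where "s = min e1 e2" and "h = (\<beta>1 + \<beta>2) / 2" and "\<rho> = (\<beta>1 - \<beta>2) / 2"
  define t where "t = s * cos h / cos \<rho>"
  have s: "0 < s" "s \<le> e1" "s \<le> e2" using e1 e2 unfolding s_def by auto
  have h: "0 < h" "h < pi / 2" "\<bar>\<rho>\<bar> < h" using \<beta> unfolding h_def \<rho>_def by auto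
  have h\<rho>: "h + \<rho> = \<beta>1" "h - \<rho> = \<beta>2" "2 * h = \<beta>1 + \<beta>2" by (simp_all add: h_def \<rho>_def field_simps)
  have "cos h \<le> cos \<bar>\<rho>\<bar>" using h by (intro cos_monotone_0_pi_le) auto
  moreover have "cos h > 0" using h by (intro cos_gt_zero_pi) auto
  ultimately have t: "0 < t" "t \<le> s" using s unfolding t_def by (auto simp: field_simps)
  have "alex_angle x y1 y3 \<le> cmp_angle x (gpt x y1 s) (gpt x y3 s)"
    using alex_angle_le_geod_cmp_angle [OF y(1,3), of s s] s e1 e2
    unfolding geod_cmp_angle_def by auto
  also have "\<dots> < 2 * h"
  proof (rule cmp_angle_add_less [OF h s(1)])
    show "dist x (gpt x y1 s) = s" "dist x (gpt x y2 t) = s * cos h / cos \<rho>"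
      "dist x (gpt x y3 s) = s"
      using dist_gpt(1) s t e1 e2 unfolding t_def by auto
    show "cmp_angle x (gpt x y1 s) (gpt x y2 t) < h + \<rho>"
      using e1(4) [of s t] s t unfolding geod_cmp_angle_def h\<rho> by auto
    show "cmp_angle x (gpt x y2 t) (gpt x y3 s) < h - \<rho>"
      using e2(4) [of t s] s t unfolding geod_cmp_angle_def h\<rho> by auto
  qed
  finally show ?thesis unfolding h\<rho>(3) .
qed

lemma alex_angle_triangle:
  fixes x y1 y2 y3 :: 'a
  assumes y: "y1 \<noteq> x" "y2 \<noteq> x" "y3 \<noteq> x"
  shows "alex_angle x y1 y3 \<le> alex_angle x y1 y2 + alex_angle x y2 y3"
proof (rule ccontr)
  let ?A1 = "alex_angle x y1 y2" and ?A2 = "alex_angle x y2 y3" and ?A3 = "alex_angle x y1 y3"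
  assume contra: "\<not> ?thesis"
  define \<delta> where "\<delta> = (?A3 - ?A1 - ?A2) / 3"
  have "3 * \<delta> = ?A3 - ?A1 - ?A2" "\<delta> > 0" using contra by (simp_all add: \<delta>_def)
  moreover have "0 \<le> ?A1" "0 \<le> ?A2" "?A3 \<le> pi"
    using alex_angle_nonneg alex_angle_le_pi y by auto
  ultimately have "?A3 < (?A1 + \<delta>) + (?A2 + \<delta>)"
    using alex_angle_less_add [OF y, of "?A1 + \<delta>" "?A2 + \<delta>"] by simp
  with \<open>3 * \<delta> = ?A3 - ?A1 - ?A2\<close> \<open>\<delta> > 0\<close> show False by linarith
qed

section \<open>The tangent cone of a Hadamard space\<close>

lemma dirseq_const:
  fixes z y :: 'a
  assumes "y \<noteq> z"
  shows "dirseq z (\<lambda>_. y)"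
  unfolding dirseq_def using alex_angle_self [OF assms] assms by auto

lemma tlog_in_T:
  fixes z y :: 'a
  shows "tlog z y \<in> T z"
  unfolding tlog_def T_def tzero_def using dirseq_const by auto

lemma alex_angle_diff_le:
  fixes z a b c :: 'a
  assumes "a \<noteq> z" "b \<noteq> z" "c \<noteq> z"
  shows "\<bar>alex_angle z a c - alex_angle z b c\<bar> \<le> alex_angle z a b"
  using alex_angle_triangle [OF assms(1,2,3)] alex_angle_triangle [OF assms(2,1,3)]
    alex_angle_commute [OF assms(1,2)]
  by linarith

lemma convergent_alex_angle:
  fixes z :: 'a
  assumes u: "dirseq z us" and v: "dirseq z vs"
  shows "convergent (\<lambda>k. alex_angle z (us k) (vs k))"
proof -
  have "Cauchy (\<lambda>k. alex_angle z (us k) (vs k))"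
  proof (rule metric_CauchyI)
    fix e :: real assume "e > 0"
    then obtain N1 N2 where
      N1: "\<forall>m\<ge>N1. \<forall>n\<ge>N1. alex_angle z (us m) (us n) < e / 2" and
      N2: "\<forall>m\<ge>N2. \<forall>n\<ge>N2. alex_angle z (vs m) (vs n) < e / 2"
      using u v unfolding dirseq_def by (meson half_gt_zero)
    have "dist (alex_angle z (us m) (vs m)) (alex_angle z (us n) (vs n)) < e"
      if "max N1 N2 \<le> m" "max N1 N2 \<le> n" for m n
    proof -
      have ne: "us m \<noteq> z" "us n \<noteq> z" "vs m \<noteq> z" "vs n \<noteq> z"
        using dirseq_neq u v by blast+
      have "alex_angle z (us m) (us n) < e / 2" "alex_angle z (vs m) (vs n) < e / 2"
        using N1 N2 that by auto
      then show ?thesis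
        using alex_angle_diff_le [OF ne(1,2,3)] alex_angle_diff_le [OF ne(3,4,2)]
          alex_angle_commute [OF ne(2,3)] alex_angle_commute [OF ne(2,4)]
        unfolding dist_real_def by linarith
    qed
    then show "\<exists>M. \<forall>m\<ge>M. \<forall>n\<ge>M. dist (alex_angle z (us m) (vs m)) (alex_angle z (us n) (vs n)) < e"
      by blast
  qed
  then show ?thesis using Cauchy_convergent_iff by blast
qed

lemma LIMSEQ_alex_angle:
  fixes z :: 'a
  assumes "dirseq z us" "dirseq z vs"
  shows "(\<lambda>k. alex_angle z (us k) (vs k)) \<longlonglongrightarrow> lim (\<lambda>k. alex_angle z (us k) (vs k))"
  using convergent_alex_angle [OF assms] by (simp add: convergent_LIMSEQ_iff)

lemma lim_alex_angle_bounds: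
  fixes z :: 'a
  assumes u: "dirseq z us" and v: "dirseq z vs"
  shows "0 \<le> lim (\<lambda>k. alex_angle z (us k) (vs k))" "lim (\<lambda>k. alex_angle z (us k) (vs k)) \<le> pi"
proof -
  have ne: "us k \<noteq> z" "vs k \<noteq> z" for k using dirseq_neq u v by blast+
  show "0 \<le> lim (\<lambda>k. alex_angle z (us k) (vs k))"
    by (rule LIMSEQ_le_const [OF LIMSEQ_alex_angle [OF assms]]) (use alex_angle_nonneg ne in blast)
  show "lim (\<lambda>k. alex_angle z (us k) (vs k)) \<le> pi"
    by (rule LIMSEQ_le_const2 [OF LIMSEQ_alex_angle [OF assms]]) (use alex_angle_le_pi ne in blast)
qed

lemma tinner_tlog:
  fixes z y :: 'a
  assumes "u \<in> T z" "0 < tnorm u" "y \<noteq> z"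
  shows "tinner u (tlog z y) = tnorm u * dist z y * cos (lim (\<lambda>k. alex_angle z (tdir u k) y))"
  using assms tbase_T [OF assms(1)] unfolding tinner_def tangle_def tlog_def tnorm_def tdir_def
  by auto

lemma tinner_tlog_tlog:
  fixes z x y :: 'a
  assumes "x \<noteq> z" "y \<noteq> z"
  shows "tinner (tlog z x) (tlog z y) = dist z x * dist z y * cos (alex_angle z x y)"
  using assms unfolding tlog_def tinner_def tangle_def tnorm_def tbase_def tdir_def
  by (simp add: limI)

lemma dist_sq_le_tinner_tlog:
  fixes z x y :: 'a
  shows "(dist z x)\<^sup>2 + (dist z y)\<^sup>2 - (dist x y)\<^sup>2 \<le> 2 * tinner (tlog z x) (tlog z y)"
proof -
  consider "x = z" | "y = z" | "x \<noteq> z" "y \<noteq> z" by blast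
  then show ?thesis
  proof cases
    case 1
    then show ?thesis by (simp add: tnorm_tlog)
  next
    case 2
    then show ?thesis by (simp add: dist_commute)
  next
    case 3
    then show ?thesis using dist_sq_ge_alex_angle [of x z y] tinner_tlog_tlog [of x z y] by simp
  qed
qed

lemma lim_alex_angle_cong:
  fixes z y :: 'a
  assumes u: "dirseq z us" and v: "dirseq z vs" and y: "y \<noteq> z"
    and uv: "(\<lambda>k. alex_angle z (us k) (vs k)) \<longlonglongrightarrow> 0"
  shows "lim (\<lambda>k. alex_angle z (us k) y) = lim (\<lambda>k. alex_angle z (vs k) y)"
proof -
  have "(\<lambda>k. \<bar>alex_angle z (us k) y - alex_angle z (vs k) y\<bar>)
      \<longlonglongrightarrow> \<bar>lim (\<lambda>k. alex_angle z (us k) y) - lim (\<lambda>k. alex_angle z (vs k) y)\<bar>"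
    using LIMSEQ_alex_angle [OF u dirseq_const [OF y]] LIMSEQ_alex_angle [OF v dirseq_const [OF y]]
    by (intro tendsto_intros)
  moreover have "\<bar>alex_angle z (us k) y - alex_angle z (vs k) y\<bar> \<le> alex_angle z (us k) (vs k)" for k
    using alex_angle_diff_le [OF dirseq_neq [OF u] dirseq_neq [OF v] y] .
  ultimately have "\<bar>lim (\<lambda>k. alex_angle z (us k) y) - lim (\<lambda>k. alex_angle z (vs k) y)\<bar> \<le> 0"
    using uv by (intro LIMSEQ_le) auto
  then show ?thesis by simp
qed

lemma lim_alex_angle_eq_0:
  fixes z :: 'a
  assumes u: "dirseq z us" and v: "dirseq z vs"
    and "cos (lim (\<lambda>k. alex_angle z (us k) (vs k))) = 1"
  shows "lim (\<lambda>k. alex_angle z (us k) (vs k)) = 0"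
proof (rule ccontr)
  let ?L = "lim (\<lambda>k. alex_angle z (us k) (vs k))"
  assume "?L \<noteq> 0"
  then have "cos ?L < cos 0"
    using lim_alex_angle_bounds [OF u v] by (intro cos_monotone_0_pi) auto
  with assms(3) show False by simp
qed

lemma tinner_tlog_cong:
  fixes z y :: 'a
  assumes u: "u \<in> T z" and v: "v \<in> T z" and d: "tdist u v = 0"
  shows "tinner u (tlog z y) = tinner v (tlog z y)"
proof -
  have nn: "0 \<le> tnorm u" "0 \<le> tnorm v" using tnorm_nonneg u v by blast+
  have zero: "(tnorm u)\<^sup>2 + (tnorm v)\<^sup>2 - 2 * (tnorm u * tnorm v * cos (tangle u v)) = 0"
    using tdist_sq [OF nn] d unfolding tinner_def by simp
  moreover have "tnorm u * tnorm v * cos (tangle u v) \<le> tnorm u * tnorm v"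
    using nn by (simp add: mult_left_le)
  ultimately have "(tnorm u - tnorm v)\<^sup>2 \<le> 0" by (simp add: power2_eq_square algebra_simps)
  then have eq: "tnorm u = tnorm v" by simp
  show ?thesis
  proof (cases "y = z \<or> tnorm u = 0")
    case True
    then show ?thesis using eq by auto
  next
    case False
    then have y: "y \<noteq> z" and pos: "0 < tnorm u" "0 < tnorm v" using nn eq by auto
    have du: "dirseq z (tdir u)" and dv: "dirseq z (tdir v)"
      using dirseq_tdir u v pos by blast+
    have "cos (tangle u v) = 1"
      using zero eq pos by (simp add: power2_eq_square algebra_simps)
    moreover have "tangle u v = lim (\<lambda>k. alex_angle z (tdir u k) (tdir v k))"
      unfolding tangle_def tbase_T [OF u] ..
    ultimately have "lim (\<lambda>k. alex_angle z (tdir u k) (tdir v k)) = 0"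
      using lim_alex_angle_eq_0 [OF du dv] by simp
    then have "(\<lambda>k. alex_angle z (tdir u k) (tdir v k)) \<longlonglongrightarrow> 0"
      using LIMSEQ_alex_angle [OF du dv] by simp
    then show ?thesis
      using tinner_tlog [OF u pos(1) y] tinner_tlog [OF v pos(2) y] eq
        lim_alex_angle_cong [OF du dv y] by simp
  qed
qed

lemma lim_alex_angle_diff_le:
  fixes z a b :: 'a
  assumes e: "dirseq z es" and a: "a \<noteq> z" and b: "b \<noteq> z"
  shows "\<bar>lim (\<lambda>k. alex_angle z (es k) a) - lim (\<lambda>k. alex_angle z (es k) b)\<bar> \<le> alex_angle z a b"
proof -
  have "(\<lambda>k. \<bar>alex_angle z (es k) a - alex_angle z (es k) b\<bar>)
      \<longlonglongrightarrow> \<bar>lim (\<lambda>k. alex_angle z (es k) a) - lim (\<lambda>k. alex_angle z (es k) b)\<bar>"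
    using LIMSEQ_alex_angle [OF e dirseq_const [OF a]] LIMSEQ_alex_angle [OF e dirseq_const [OF b]]
    by (intro tendsto_intros)
  moreover have "\<bar>alex_angle z (es k) a - alex_angle z (es k) b\<bar> \<le> alex_angle z a b" for k
    using alex_angle_diff_le [OF a b dirseq_neq [OF e]]
      alex_angle_commute [OF dirseq_neq [OF e] a] alex_angle_commute [OF dirseq_neq [OF e] b]
    by simp
  ultimately show ?thesis by (intro LIMSEQ_le_const2) auto
qed

lemma tinner_tlog_diff_le:
  fixes z a b :: 'a
  assumes \<phi>: "\<phi> \<in> T z"
  shows "tinner \<phi> (tlog z a) - tinner \<phi> (tlog z b) \<le> tnorm \<phi> * dist a b"
proof (cases "tnorm \<phi> = 0 \<or> a = z \<or> b = z")
  case True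
  note bound = abs_tinner_tlog_le [OF \<phi>]
  from True consider "tnorm \<phi> = 0" | "a = z" | "b = z" by blast
  then show ?thesis
  proof cases
    case 1
    then show ?thesis by simp
  next
    case 2
    then show ?thesis using bound [of b] by (simp add: abs_le_iff)
  next
    case 3
    then show ?thesis using bound [of a] by (simp add: abs_le_iff dist_commute)
  qed
next
  case False
  then have pos: "0 < tnorm \<phi>" and a: "a \<noteq> z" and b: "b \<noteq> z"
    using tnorm_nonneg [OF \<phi>] by auto
  have e: "dirseq z (tdir \<phi>)" using dirseq_tdir [OF \<phi> pos] .
  define \<theta>a \<theta>b where "\<theta>a = lim (\<lambda>k. alex_angle z (tdir \<phi> k) a)"
    and "\<theta>b = lim (\<lambda>k. alex_angle z (tdir \<phi> k) b)"
  have "cos (alex_angle z a b) \<le> cos \<bar>\<theta>a - \<theta>b\<bar>"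
    using lim_alex_angle_diff_le [OF e a b] alex_angle_le_pi [OF a b] unfolding \<theta>a_def \<theta>b_def
    by (intro cos_monotone_0_pi_le) auto
  then have "dist z a * cos \<theta>a - dist z b * cos \<theta>b \<le> dist a b"
    using dist_sq_ge_alex_angle [OF a b] by (intro polar_diff_le) auto
  then have "tnorm \<phi> * (dist z a * cos \<theta>a - dist z b * cos \<theta>b) \<le> tnorm \<phi> * dist a b"
    using pos by (intro mult_left_mono) auto
  then show ?thesis
    using tinner_tlog [OF \<phi> pos a] tinner_tlog [OF \<phi> pos b] unfolding \<theta>a_def \<theta>b_def
    by (simp add: algebra_simps)
qed

section \<open>Resolvents of monotone vector fields\<close>

lemma tmem_tinner_tlog:
  fixes A :: "'a \<Rightarrow> 'a tv set" and z :: 'a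
  assumes "vfield A" "w \<in> T z" "tmem w (A z)"
  obtains v where "v \<in> A z" "\<And>y. tinner v (tlog z y) = tinner w (tlog z y)"
proof -
  obtain v where v: "v \<in> A z" "tbase v = tbase w" "tdist v w = 0"
    using assms(3) unfolding tmem_def by auto
  have "v \<in> T z" using assms(1) v(1) unfolding vfield_def by auto
  then show ?thesis using that v tinner_tlog_cong assms(2) by blast
qed

lemma resolvent_tinner:
  fixes A :: "'a \<Rightarrow> 'a tv set" and z x :: 'a
  assumes "vfield A" "0 < l" "tmem (tscale (1 / l) (tlog z x)) (A z)"
  obtains u where "u \<in> A z" "\<And>y. tinner u (tlog z y) = tinner (tlog z x) (tlog z y) / l"
proof -
  have "tscale (1 / l) (tlog z x) \<in> T z" using tscale_in_T [OF tlog_in_T] assms(2) by simp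
  then obtain v where v: "v \<in> A z"
      "\<And>y. tinner v (tlog z y) = tinner (tscale (1 / l) (tlog z x)) (tlog z y)"
    using tmem_tinner_tlog [OF assms(1) _ assms(3)] by blast
  show ?thesis
  proof (rule that [OF v(1)])
    show "tinner v (tlog z y) = tinner (tlog z x) (tlog z y) / l" for y
      unfolding v(2) tinner_tscale by simp
  qed
qed

text \<open>Monotonicity at the two resolvent points, turned into distances by the law of cosines
  in the tangent cones.\<close>
lemma resolvent_pair_ineq:
  fixes A :: "'a \<Rightarrow> 'a tv set" and z1 z2 x1 x2 :: 'a
  assumes mono: "monotone_vf A" and l: "0 < l"
    and z1: "tmem (tscale (1 / l) (tlog z1 x1)) (A z1)"
    and z2: "tmem (tscale (1 / l) (tlog z2 x2)) (A z2)"
  shows "(dist z1 x1)\<^sup>2 + (dist z2 x2)\<^sup>2 + 2 * (dist z1 z2)\<^sup>2 \<le> (dist x1 z2)\<^sup>2 + (dist x2 z1)\<^sup>2"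
proof -
  have vf: "vfield A" using mono unfolding monotone_vf_def by auto
  obtain u1 where u1: "u1 \<in> A z1" "\<And>y. tinner u1 (tlog z1 y) = tinner (tlog z1 x1) (tlog z1 y) / l"
    using resolvent_tinner [OF vf l z1] by blast
  obtain u2 where u2: "u2 \<in> A z2" "\<And>y. tinner u2 (tlog z2 y) = tinner (tlog z2 x2) (tlog z2 y) / l"
    using resolvent_tinner [OF vf l z2] by blast
  have "tinner u1 (tlog z1 z2) \<le> - tinner u2 (tlog z2 z1)"
    using mono u1(1) u2(1) unfolding monotone_vf_def by blast
  then have "tinner (tlog z1 x1) (tlog z1 z2) / l \<le> - (tinner (tlog z2 x2) (tlog z2 z1) / l)"
    unfolding u1(2) u2(2) .
  then have "tinner (tlog z1 x1) (tlog z1 z2) + tinner (tlog z2 x2) (tlog z2 z1) \<le> 0"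
    using l by (simp add: field_simps)
  then show ?thesis
    using dist_sq_le_tinner_tlog [of z1 x1 z2] dist_sq_le_tinner_tlog [of z2 x2 z1]
    by (simp add: dist_commute)
qed

lemma resolvent_unique:
  fixes A :: "'a \<Rightarrow> 'a tv set" and z1 z2 x :: 'a
  assumes "monotone_vf A" "0 < l"
    and "tmem (tscale (1 / l) (tlog z1 x)) (A z1)" "tmem (tscale (1 / l) (tlog z2 x)) (A z2)"
  shows "z1 = z2"
  using resolvent_pair_ineq [OF assms] by (simp add: dist_commute)

lemma resolvent_mem:
  fixes A :: "'a \<Rightarrow> 'a tv set" and x :: 'a
  assumes mono: "monotone_vf A" and surj: "surjectivity_cond A" and l: "0 < l"
  shows "tmem (tscale (1 / l) (tlog (resolvent A l x) x)) (A (resolvent A l x))"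
proof -
  obtain z where z: "tmem (tscale (1 / l) (tlog z x)) (A z)"
    using surj l unfolding surjectivity_cond_def by blast
  show ?thesis
    unfolding resolvent_def by (rule theI [of _ z]) (use z resolvent_unique [OF mono l] in blast)+
qed

lemma dist_resolvent_sq_le:
  fixes A :: "'a \<Rightarrow> 'a tv set" and x1 x2 :: 'a
  assumes "monotone_vf A" "surjectivity_cond A" "0 < l"
  defines "z1 \<equiv> resolvent A l x1" and "z2 \<equiv> resolvent A l x2"
  shows "(dist z1 z2)\<^sup>2 \<le> dist x1 x2 * (dist x1 z1 + dist x2 z2 + dist x1 x2)"
proof -
  have "(dist x1 z2)\<^sup>2 \<le> (dist x1 x2 + dist x2 z2)\<^sup>2" "(dist x2 z1)\<^sup>2 \<le> (dist x1 x2 + dist x1 z1)\<^sup>2"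
    using dist_triangle [of x1 z2 x2] dist_triangle [of x2 z1 x1]
    by (auto intro!: power_mono simp: dist_commute)
  then show ?thesis
    using resolvent_pair_ineq [OF assms(1,3) resolvent_mem [OF assms(1-3)] resolvent_mem [OF assms(1-3)],
        of x1 x2]
    unfolding z1_def [symmetric] z2_def [symmetric]
    by (simp add: dist_commute power2_eq_square algebra_simps)
qed

lemma isCont_resolvent:
  fixes A :: "'a \<Rightarrow> 'a tv set" and y :: 'a
  assumes "monotone_vf A" "surjectivity_cond A" "0 < l"
  shows "isCont (resolvent A l) y"
  unfolding continuous_at_eps_delta
proof (intro allI impI)
  fix \<epsilon> :: real assume "\<epsilon> > 0"
  define r where "r = dist y (resolvent A l y)"
  define d where "d = min 1 (min (\<epsilon> / 2) (\<epsilon>\<^sup>2 / (4 * (r + 1))))"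
  have "r \<ge> 0" unfolding r_def by simp
  then have "d > 0" unfolding d_def using \<open>\<epsilon> > 0\<close> by (auto intro!: divide_pos_pos)
  moreover have "dist (resolvent A l y') (resolvent A l y) < \<epsilon>" if "dist y' y < d" for y'
  proof (rule less_of_sq_le)
    define D where "D = dist (resolvent A l y') (resolvent A l y)"
    have "dist y' (resolvent A l y') \<le> dist y y' + r + D"
      unfolding r_def D_def
      using dist_triangle [of y' "resolvent A l y'" y] dist_triangle [of y "resolvent A l y'" "resolvent A l y"]
      by (simp add: dist_commute)
    then show "D\<^sup>2 \<le> dist y y' * (2 * r + 2 * dist y y' + D)"
      using dist_resolvent_sq_le [OF assms, of y y'] mult_left_mono [of _ _ "dist y y'"]
      unfolding D_def r_def by (smt (verit, best) dist_commute zero_le_dist)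
    show "dist y y' < 1" "dist y y' < \<epsilon> / 2" "dist y y' < \<epsilon>\<^sup>2 / (4 * (r + 1))"
      using that unfolding d_def by (auto simp: dist_commute)
  qed (auto simp: r_def)
  ultimately show "\<exists>d>0. \<forall>y'. dist y' y < d \<longrightarrow> dist (resolvent A l y') (resolvent A l y) < \<epsilon>"
    by blast
qed

lemma dist_resolvent_step:
  fixes A :: "'a \<Rightarrow> 'a tv set" and x xs :: 'a
  assumes sm: "strongly_monotone_vf A a" and a1: "a \<le> 1"
    and surj: "surjectivity_cond A" and l: "0 < l"
    and \<phi>: "\<phi> \<in> T xs" "tmem \<phi> (A xs)"
  defines "z \<equiv> resolvent A l x"
  shows "(dist z xs)\<^sup>2 + 2 * l * a * (dist x xs)\<^sup>2
      \<le> (1 + 8 * l\<^sup>2) * (dist x xs)\<^sup>2 - 2 * l * tinner \<phi> (tlog xs x) + 2 * l\<^sup>2 * (tnorm \<phi>)\<^sup>2"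
    and "(dist z xs)\<^sup>2 \<le> (dist x xs)\<^sup>2 - 2 * l * tinner \<phi> (tlog xs x) + 2 * l\<^sup>2 * (tnorm \<phi>)\<^sup>2"
proof -
  have mono: "monotone_vf A" using strongly_monotone_imp_monotone [OF sm] .
  have vf: "vfield A" and a0: "0 < a" using sm unfolding strongly_monotone_vf_def by auto
  obtain u where u: "u \<in> A z" "\<And>y. tinner u (tlog z y) = tinner (tlog z x) (tlog z y) / l"
    using resolvent_tinner [OF vf l resolvent_mem [OF mono surj l]] unfolding z_def by blast
  obtain v where v: "v \<in> A xs" "\<And>y. tinner v (tlog xs y) = tinner \<phi> (tlog xs y)"
    using tmem_tinner_tlog [OF vf \<phi>] by blast
  have "tinner u (tlog z xs) \<le> - tinner v (tlog xs z) - a * (dist z xs)\<^sup>2"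
    using sm u(1) v(1) unfolding strongly_monotone_vf_def by blast
  then have "tinner (tlog z x) (tlog z xs) / l \<le> - tinner \<phi> (tlog xs z) - a * (dist z xs)\<^sup>2"
    unfolding u(2) v(2) .
  moreover have "dist x xs \<le> dist z xs + dist x z"
    using dist_triangle [of x xs z] by (simp add: dist_commute)
  moreover have "(dist x z)\<^sup>2 + (dist z xs)\<^sup>2 - (dist x xs)\<^sup>2 \<le> 2 * tinner (tlog z x) (tlog z xs)"
    using dist_sq_le_tinner_tlog [of z x xs] by (simp add: dist_commute)
  ultimately show "(dist z xs)\<^sup>2 + 2 * l * a * (dist x xs)\<^sup>2
      \<le> (1 + 8 * l\<^sup>2) * (dist x xs)\<^sup>2 - 2 * l * tinner \<phi> (tlog xs x) + 2 * l\<^sup>2 * (tnorm \<phi>)\<^sup>2"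
    and "(dist z xs)\<^sup>2 \<le> (dist x xs)\<^sup>2 - 2 * l * tinner \<phi> (tlog xs x) + 2 * l\<^sup>2 * (tnorm \<phi>)\<^sup>2"
    using proximal_step_real [OF l a0 a1 zero_le_dist [of z xs] zero_le_dist [of x z]
        zero_le_dist [of x xs] tnorm_nonneg [OF \<phi>(1)] _ _ _ tinner_tlog_diff_le [OF \<phi>(1), of x z]]
    by blast+
qed

end

section \<open>Measurability\<close>

lemma separable_measurable_approx:
  fixes Y :: "'w \<Rightarrow> 'a::metric_space"
  assumes sep: "separable_type TYPE('a)" and Y: "Y \<in> borel_measurable N"
  shows "\<exists>idx (e :: nat \<Rightarrow> 'a). (\<forall>k. idx k \<in> N \<rightarrow>\<^sub>M count_space UNIV)
    \<and> (\<forall>\<omega>. (\<lambda>k. e (idx k \<omega>)) \<longlonglongrightarrow> Y \<omega>)"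
proof -
  obtain D :: "'a set" where D: "countable D" "closure D = UNIV"
    using sep unfolding separable_type_def by blast
  define e where "e = from_nat_into D"
  have "D \<noteq> {}"
  proof
    assume "D = {}"
    with D(2) show False by simp
  qed
  then have range_e: "range e = D" unfolding e_def by (rule range_from_nat_into [OF _ D(1)])
  have approx: "\<exists>i. dist (e i) y < r" if r: "r > 0" for y r
  proof -
    have "y \<in> closure D" using D(2) by simp
    then obtain d where "d \<in> D" "dist d y < r"
      using closure_approachable [of y D] r by blast
    then show ?thesis using range_e by (metis rangeE)
  qed
  define idx where "idx k \<omega> = (LEAST i. dist (e i) (Y \<omega>) < 1 / Suc k)" for k \<omega>
  have idx: "dist (e (idx k \<omega>)) (Y \<omega>) < 1 / Suc k" for k \<omega>
    unfolding idx_def by (rule LeastI_ex) (rule approx, simp)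
  have dist_meas: "(\<lambda>\<omega>. dist (e i) (Y \<omega>)) \<in> borel_measurable N" for i
    using measurable_compose [OF Y borel_measurable_continuous_onI [of "\<lambda>y. dist (e i) y"]]
    by (simp add: continuous_on_dist continuous_on_const continuous_on_id)
  note dist_meas [measurable]
  have idx_meas: "idx k \<in> N \<rightarrow>\<^sub>M count_space UNIV" for k
    unfolding idx_def [abs_def] by measurable
  have lim: "(\<lambda>k. e (idx k \<omega>)) \<longlonglongrightarrow> Y \<omega>" for \<omega>
  proof (rule tendsto_sandwich [THEN tendsto_dist_iff [THEN iffD2], rotated 2])
    show "\<forall>\<^sub>F k in sequentially. 0 \<le> dist (e (idx k \<omega>)) (Y \<omega>)" by simp
    show "\<forall>\<^sub>F k in sequentially. dist (e (idx k \<omega>)) (Y \<omega>) \<le> 1 / Suc k"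
      using idx less_imp_le by (intro always_eventually allI) blast
    show "(\<lambda>k. 1 / real (Suc k)) \<longlonglongrightarrow> 0"
      using LIMSEQ_inverse_real_of_nat by (simp add: inverse_eq_divide)
  qed simp
  show ?thesis using idx_meas lim by blast
qed

lemma borel_measurable_caratheodory:
  fixes F :: "'e \<Rightarrow> 'a::metric_space \<Rightarrow> 'b::metric_space"
  assumes sep: "separable_type TYPE('a)"
    and F_meas: "\<And>y. (\<lambda>s. F s y) \<in> borel_measurable M"
    and F_cont: "\<And>s y. s \<in> space M \<Longrightarrow> isCont (F s) y"
    and S: "S \<in> N \<rightarrow>\<^sub>M M" and Y: "Y \<in> borel_measurable N"
  shows "(\<lambda>\<omega>. F (S \<omega>) (Y \<omega>)) \<in> borel_measurable N"
proof -
  obtain idx and e :: "nat \<Rightarrow> 'a" where idx: "\<And>k. idx k \<in> N \<rightarrow>\<^sub>M count_space UNIV"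
    and lim: "\<And>\<omega>. (\<lambda>k. e (idx k \<omega>)) \<longlonglongrightarrow> Y \<omega>"
    using separable_measurable_approx [OF sep Y] by blast
  have approx_meas: "(\<lambda>\<omega>. F (S \<omega>) (e (idx k \<omega>))) \<in> borel_measurable N" for k
  proof (rule measurable_compose_countable' [where f = "\<lambda>i \<omega>. F (S \<omega>) (e i)" and I = UNIV])
    show "(\<lambda>\<omega>. F (S \<omega>) (e i)) \<in> borel_measurable N" if "i \<in> UNIV" for i
      using measurable_compose [OF S F_meas] by simp
  qed (use idx in auto)
  show ?thesis
  proof (rule borel_measurable_LIMSEQ_metric [OF approx_meas])
    fix \<omega> assume "\<omega> \<in> space N"
    then have "S \<omega> \<in> space M" by (rule measurable_space [OF S])
    then show "(\<lambda>k. F (S \<omega>) (e (idx k \<omega>))) \<longlonglongrightarrow> F (S \<omega>) (Y \<omega>)"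
      using isCont_tendsto_compose [OF F_cont lim] by blast
  qed
qed

lemma space_filt [simp]: "space (filt P M \<xi> n) = space P"
  unfolding filt_def by (simp add: space_measure_of_conv)

lemma sets_filt:
  "sets (filt P M \<xi> n) = sigma_sets (space P) (\<Union>i<n. {\<xi> (Suc i) -` B \<inter> space P | B. B \<in> sets M})"
proof -
  have "(\<Union>i\<in>{1..n}. {\<xi> i -` B \<inter> space P | B. B \<in> sets M})
      = (\<Union>i<n. {\<xi> (Suc i) -` B \<inter> space P | B. B \<in> sets M})"
  proof -
    have "{1..n} = Suc ` {..<n}" by (simp add: image_Suc_lessThan)
    then show ?thesis by auto
  qed
  moreover have "sets (filt P M \<xi> n) = sigma_sets (space P) (\<Union>i\<in>{1..n}. {\<xi> i -` B \<inter> space P | B. B \<in> sets M})"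
    unfolding filt_def by (rule sets_measure_of) auto
  ultimately show ?thesis by simp
qed

lemma subalgebra_filt:
  assumes "\<And>i. \<xi> i \<in> P \<rightarrow>\<^sub>M M"
  shows "subalgebra P (filt P M \<xi> n)"
  unfolding subalgebra_def space_filt sets_filt
  using assms by (auto intro!: sets.sigma_sets_subset measurable_sets [OF assms])

lemma measurable_filt_Suc:
  assumes "f \<in> filt P M \<xi> n \<rightarrow>\<^sub>M L"
  shows "f \<in> filt P M \<xi> (Suc n) \<rightarrow>\<^sub>M L"
proof -
  have "sets (filt P M \<xi> n) \<subseteq> sets (filt P M \<xi> (Suc n))"
    unfolding sets_filt by (intro sigma_sets_mono' UN_mono) auto
  then show ?thesis using assms unfolding measurable_def by auto
qed

lemma measurable_filt_xi:
  assumes "\<And>i. \<xi> i \<in> P \<rightarrow>\<^sub>M M"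
  shows "\<xi> (Suc n) \<in> filt P M \<xi> (Suc n) \<rightarrow>\<^sub>M M"
proof (rule measurableI)
  show "\<xi> (Suc n) \<omega> \<in> space M" if "\<omega> \<in> space (filt P M \<xi> (Suc n))" for \<omega>
    using measurable_space [OF assms] that by simp
  show "\<xi> (Suc n) -` B \<inter> space (filt P M \<xi> (Suc n)) \<in> sets (filt P M \<xi> (Suc n))" if "B \<in> sets M" for B
    unfolding space_filt sets_filt using that by (intro sigma_sets.Basic) blast
qed

lemma borel_measurable_dist_sq:
  fixes f :: "'w \<Rightarrow> 'a::metric_space"
  assumes "f \<in> borel_measurable N"
  shows "(\<lambda>\<omega>. (dist (f \<omega>) c)\<^sup>2) \<in> borel_measurable N"
  using measurable_compose [OF assms borel_measurable_continuous_onI [of "\<lambda>y. (dist y c)\<^sup>2"]]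
  by (simp add: continuous_on_dist continuous_on_const continuous_on_id continuous_on_power)

lemma sigma_sets_vimage_compose_subset:
  assumes \<xi>: "\<xi> \<in> P \<rightarrow>\<^sub>M M" and f: "f \<in> M \<rightarrow>\<^sub>M N"
  shows "sigma_sets (space P) {(\<lambda>\<omega>. f (\<xi> \<omega>)) -` A \<inter> space P | A. A \<in> sets N}
    \<subseteq> sigma_sets (space P) {\<xi> -` B \<inter> space P | B. B \<in> sets M}"
proof -
  have "(\<lambda>\<omega>. f (\<xi> \<omega>)) -` A \<inter> space P = \<xi> -` (f -` A \<inter> space M) \<inter> space P" for A
    using measurable_space [OF \<xi>] by auto
  moreover have "f -` A \<inter> space M \<in> sets M" if "A \<in> sets N" for A
    using measurable_sets [OF f that] .
  ultimately show ?thesis by (intro sigma_sets_mono') blast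
qed

lemma indep_var_filt:
  fixes X :: "'w \<Rightarrow> real" and f :: "'e \<Rightarrow> real"
  assumes "prob_space P" and \<xi>: "\<And>i. \<xi> i \<in> P \<rightarrow>\<^sub>M M"
    and indep: "prob_space.indep_vars P (\<lambda>_. M) (\<lambda>n. \<xi> (Suc n)) UNIV"
    and X: "X \<in> borel_measurable (filt P M \<xi> n)" and f: "f \<in> borel_measurable M"
  shows "prob_space.indep_var P borel X borel (\<lambda>\<omega>. f (\<xi> (Suc n) \<omega>))"
proof -
  interpret prob_space P by fact
  define E where "E i = {\<xi> (Suc i) -` A \<inter> space P | A. A \<in> sets M}" for i
  define K where "K b = (if b then {..<n} else {n})" for b
  have indep_K: "indep_sets (\<lambda>b. sigma_sets (space P) (\<Union>i\<in>K b. E i)) UNIV"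
  proof (rule indep_sets_collect_sigma)
    show "indep_sets E (\<Union>b\<in>UNIV. K b)"
      using indep unfolding indep_vars_def2 E_def by (auto intro: indep_sets_mono_index)
    show "Int_stable (E i)" for i
    proof (rule Int_stableI)
      fix S1 S2 assume "S1 \<in> E i" "S2 \<in> E i"
      then obtain B1 B2 where "B1 \<in> sets M" "B2 \<in> sets M"
        "S1 = \<xi> (Suc i) -` B1 \<inter> space P" "S2 = \<xi> (Suc i) -` B2 \<inter> space P"
        unfolding E_def by auto
      then show "S1 \<inter> S2 \<in> E i" unfolding E_def by (intro CollectI exI [of _ "B1 \<inter> B2"]) auto
    qed
    show "disjoint_family_on K UNIV" unfolding disjoint_family_on_def K_def by auto
  qed
  have "sigma_sets (space P) {X -` A \<inter> space P | A. A \<in> sets borel} \<subseteq> sets (filt P M \<xi> n)"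
    using sets.sigma_sets_subset [of "{X -` A \<inter> space P | A. A \<in> sets borel}" "filt P M \<xi> n"]
      measurable_sets [OF X] by auto
  then have X_sets: "sigma_sets (space P) {X -` A \<inter> space P | A. A \<in> sets borel}
      \<subseteq> sigma_sets (space P) (\<Union>i\<in>K True. E i)"
    unfolding sets_filt K_def E_def by simp
  have f_sets: "sigma_sets (space P) {(\<lambda>\<omega>. f (\<xi> (Suc n) \<omega>)) -` A \<inter> space P | A. A \<in> sets borel}
      \<subseteq> sigma_sets (space P) (\<Union>i\<in>K False. E i)"
    using sigma_sets_vimage_compose_subset [OF \<xi> [of "Suc n"] f] unfolding K_def E_def by simp
  have "random_variable borel X" "random_variable borel (\<lambda>\<omega>. f (\<xi> (Suc n) \<omega>))"
    using measurable_from_subalg [OF subalgebra_filt [of \<xi> P M, OF \<xi>] X] measurable_compose [OF \<xi> f] by auto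
  moreover have "indep_set (sigma_sets (space P) {X -` A \<inter> space P | A. A \<in> sets borel})
      (sigma_sets (space P) {(\<lambda>\<omega>. f (\<xi> (Suc n) \<omega>)) -` A \<inter> space P | A. A \<in> sets borel})"
    unfolding indep_set_def
    by (rule indep_sets_mono_sets [OF indep_K]) (use X_sets f_sets in \<open>simp split: bool.split\<close>)
  ultimately show ?thesis unfolding indep_var_eq by blast
qed

section \<open>Real sequences\<close>

lemma weighted_sum_le:
  fixes a lam :: "nat \<Rightarrow> real"
  assumes a_nn: "\<And>n. 0 \<le> a n" and c0: "0 \<le> c0" and sq: "summable (\<lambda>n. (lam n)\<^sup>2)"
    and R0: "\<And>n. a (Suc n) \<le> a n + 2 * (lam n)\<^sup>2 * c0"
    and R1: "\<And>n. a (Suc n) + 2 * lam n * ab * a n \<le> (1 + 8 * (lam n)\<^sup>2) * a n + 2 * (lam n)\<^sup>2 * c0"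
  defines "S \<equiv> \<Sum>n. (lam n)\<^sup>2"
  shows "2 * ab * (\<Sum>n<m. lam n * a n) \<le> a 0 + (8 * (a 0 + 2 * c0 * S) + 2 * c0) * S"
proof -
  have partial: "(\<Sum>i<n. (lam i)\<^sup>2) \<le> S" for n
    unfolding S_def using sq by (intro sum_le_suminf) auto
  have "a n \<le> a 0 + 2 * c0 * (\<Sum>i<n. (lam i)\<^sup>2)" for n
  proof (induction n)
    case (Suc n)
    then show ?case using R0 [of n] by (simp add: algebra_simps)
  qed simp
  then have B: "a n \<le> a 0 + 2 * c0 * S" for n
    using mult_left_mono [OF partial, of "2 * c0"] c0 by (smt (verit))
  define B where "B = a 0 + 2 * c0 * S"
  have "2 * ab * (\<Sum>n<m. lam n * a n) + a m \<le> a 0 + (8 * B + 2 * c0) * (\<Sum>n<m. (lam n)\<^sup>2)"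
  proof (induction m)
    case (Suc m)
    have "8 * (lam m)\<^sup>2 * a m \<le> 8 * (lam m)\<^sup>2 * B"
      using B unfolding B_def by (intro mult_left_mono) auto
    then show ?case using Suc R1 [of m] by (simp add: algebra_simps)
  qed simp
  moreover have "(8 * B + 2 * c0) * (\<Sum>n<m. (lam n)\<^sup>2) \<le> (8 * B + 2 * c0) * S"
    using B [of 0] a_nn [of 0] c0 partial unfolding B_def by (intro mult_left_mono) auto
  ultimately show ?thesis using a_nn [of m] unfolding B_def by linarith
qed

lemma error_constant_less:
  fixes d0 c0 S b c \<Lambda> :: real
  assumes "0 \<le> d0" "d0 < b" "0 \<le> c0" "c0 < c" "0 \<le> S" "S < \<Lambda>"
  shows "d0 + (8 * (d0 + 2 * c0 * S) + 2 * c0) * S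
    < exp (2 * \<Lambda>) * (b + (4 * (b + 2 * \<Lambda> * c) + \<Lambda> * c))"
proof -
  have "d0 * (1 + 8 * S) < b * (1 + 8 * \<Lambda>)"
    using assms by (intro mult_strict_mono) auto
  moreover have "c0 * S\<^sup>2 \<le> c * \<Lambda>\<^sup>2" "c0 * S \<le> c * \<Lambda>"
    using assms by (auto intro!: mult_mono power_mono)
  ultimately have "d0 + (8 * (d0 + 2 * c0 * S) + 2 * c0) * S
      < b * (1 + 8 * \<Lambda>) + 16 * (c * \<Lambda>\<^sup>2) + 2 * (c * \<Lambda>)"
    by (simp add: power2_eq_square algebra_simps)
  also have "\<dots> \<le> (1 + 2 * \<Lambda>) * (b + (4 * (b + 2 * \<Lambda> * c) + \<Lambda> * c))"
    using assms by (simp add: power2_eq_square algebra_simps)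
  also have "\<dots> \<le> exp (2 * \<Lambda>) * (b + (4 * (b + 2 * \<Lambda> * c) + \<Lambda> * c))"
    using assms exp_ge_add_one_self [of "2 * \<Lambda>"] by (intro mult_right_mono) auto
  finally show ?thesis .
qed

lemma exists_small_in_window:
  fixes a lam :: "nat \<Rightarrow> real" and \<theta> :: "nat \<Rightarrow> real \<Rightarrow> nat"
  assumes lam: "\<And>n. 0 < lam n" and a_nn: "\<And>n. 0 \<le> a n"
    and \<theta>: "\<And>b'. 0 < b' \<Longrightarrow> b' \<le> (\<Sum>n=N..\<theta> N b'. lam n)"
    and bound: "\<And>m. (\<Sum>n<m. lam n * a n) < D" and "0 < \<epsilon>"
  shows "\<exists>n\<in>{N..\<theta> N (D / \<epsilon>)}. a n < \<epsilon>"
proof (rule ccontr)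
  let ?W = "{N..\<theta> N (D / \<epsilon>)}"
  assume "\<not> ?thesis"
  then have ge: "\<epsilon> \<le> a n" if "n \<in> ?W" for n using that by force
  have "0 < D" using bound [of 0] by simp
  have "D = \<epsilon> * (D / \<epsilon>)" using \<open>0 < \<epsilon>\<close> by simp
  also have "\<dots> \<le> \<epsilon> * (\<Sum>n\<in>?W. lam n)"
    using \<theta> \<open>0 < D\<close> \<open>0 < \<epsilon>\<close> by (intro mult_left_mono) auto
  also have "\<dots> = (\<Sum>n\<in>?W. lam n * \<epsilon>)"
    by (simp add: sum_distrib_left mult.commute)
  also have "\<dots> \<le> (\<Sum>n\<in>?W. lam n * a n)"
    using ge lam by (intro sum_mono mult_left_mono) (auto simp: less_imp_le)
  also have "\<dots> \<le> (\<Sum>n<Suc (\<theta> N (D / \<epsilon>)). lam n * a n)"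
    using lam a_nn by (intro sum_mono2) (auto intro: mult_nonneg_nonneg less_imp_le)
  finally show False using bound [of "Suc (\<theta> N (D / \<epsilon>))"] by linarith
qed

lemma liminf_ennreal_eq_0I:
  fixes a :: "nat \<Rightarrow> real"
  assumes "\<And>\<epsilon> N. 0 < \<epsilon> \<Longrightarrow> \<exists>n\<ge>N. a n < \<epsilon>"
  shows "liminf (\<lambda>n. ennreal (a n)) = 0"
proof -
  have "liminf (\<lambda>n. ennreal (a n)) \<le> 0"
  proof (rule ennreal_le_epsilon)
    fix \<epsilon> :: real assume "0 < \<epsilon>"
    have "(INF m\<in>{N..}. ennreal (a m)) \<le> ennreal \<epsilon>" for N
    proof -
      obtain n where "n \<ge> N" "a n < \<epsilon>" using assms \<open>0 < \<epsilon>\<close> by blast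
      then have "(INF m\<in>{N..}. ennreal (a m)) \<le> ennreal (a n)" by (intro INF_lower) auto
      also have "\<dots> \<le> ennreal \<epsilon>" using \<open>a n < \<epsilon>\<close> by (intro ennreal_leI) simp
      finally show ?thesis .
    qed
    then show "liminf (\<lambda>n. ennreal (a n)) \<le> 0 + ennreal \<epsilon>"
      unfolding liminf_SUP_INF by (simp add: SUP_least)
  qed
  then show ?thesis by simp
qed

section \<open>The stochastic proximal point iteration\<close>

locale stochastic_proximal_point =
  P: prob_space P + M: prob_space M
  for P :: "'w measure" and M :: "'e measure"
    and A :: "'e \<Rightarrow> 'a::complete_space \<Rightarrow> 'a tv set" and \<alpha> :: "'e \<Rightarrow> real"
    and lam :: "nat \<Rightarrow> real" and \<xi> :: "nat \<Rightarrow> 'w \<Rightarrow> 'e"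
    and x0 xs :: 'a and x :: "nat \<Rightarrow> 'w \<Rightarrow> 'a" and \<phi>s :: "'e \<Rightarrow> 'a tv" +
  assumes hadamard: "hadamard TYPE('a)"
    and separable: "separable_type TYPE('a)"
    and surj: "\<And>s. s \<in> space M \<Longrightarrow> surjectivity_cond (A s)"
    and resolvent_measurable: "\<And>l y. 0 < l \<Longrightarrow> (\<lambda>s. resolvent (A s) l y) \<in> borel_measurable M"
    and lam_pos: "\<And>n. 0 < lam n"
    and x_0: "\<And>\<omega>. \<omega> \<in> space P \<Longrightarrow> x 0 \<omega> = x0"
    and x_Suc: "\<And>n \<omega>. \<omega> \<in> space P \<Longrightarrow> x (Suc n) \<omega> = resolvent (A (\<xi> (Suc n) \<omega>)) (lam n) (x n \<omega>)"
    and \<xi>_measurable: "\<And>n. \<xi> n \<in> P \<rightarrow>\<^sub>M M"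
    and indep: "prob_space.indep_vars P (\<lambda>_. M) (\<lambda>n. \<xi> (Suc n)) UNIV"
    and distr_\<xi>: "\<And>n. distr P M (\<xi> (Suc n)) = M"
    and \<alpha>_measurable: "\<alpha> \<in> borel_measurable M"
    and \<alpha>_le_1: "\<And>s. s \<in> space M \<Longrightarrow> \<alpha> s \<le> 1"
    and strong: "\<And>s. s \<in> space M \<Longrightarrow> strongly_monotone_vf (A s) (\<alpha> s)"
    and \<phi>s: "\<phi>s \<in> SA 2 M A xs"
    and cond_exp_cross_term: "\<And>n. AE \<omega> in P. real_cond_exp P (filt P M \<xi> n)
      (\<lambda>\<omega>. tinner (\<phi>s (\<xi> (Suc n) \<omega>)) (tlog xs (x n \<omega>))) \<omega> = 0"
begin

definition cross_term :: "nat \<Rightarrow> 'w \<Rightarrow> real" where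
  "cross_term n \<omega> = tinner (\<phi>s (\<xi> (Suc n) \<omega>)) (tlog xs (x n \<omega>))"

definition mean_sq_err :: "nat \<Rightarrow> real" where
  "mean_sq_err n = (\<integral>\<omega>. (dist (x n \<omega>) xs)\<^sup>2 \<partial>P)"

lemma subalgebra_filt_P: "subalgebra P (filt P M \<xi> n)"
  using subalgebra_filt [of \<xi> P M] \<xi>_measurable by blast

lemma \<xi>_in_space: "\<omega> \<in> space P \<Longrightarrow> \<xi> n \<omega> \<in> space M"
  using measurable_space [OF \<xi>_measurable] .

lemma \<phi>s_in_T: "s \<in> space M \<Longrightarrow> \<phi>s s \<in> T xs"
  and tmem_\<phi>s: "s \<in> space M \<Longrightarrow> tmem (\<phi>s s) (A s xs)"
  using \<phi>s unfolding SA_def by auto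

lemma \<alpha>_pos: "s \<in> space M \<Longrightarrow> 0 < \<alpha> s"
  using strong unfolding strongly_monotone_vf_def by blast

lemma integrable_tnorm_\<phi>s: "integrable M (\<lambda>s. (tnorm (\<phi>s s))\<^sup>2)"
  using \<phi>s unfolding SA_def tLp_def by auto

lemma integrable_integral_\<xi>:
  fixes f :: "'e \<Rightarrow> real"
  assumes "integrable M f"
  shows "integrable P (\<lambda>\<omega>. f (\<xi> (Suc n) \<omega>))" "(\<integral>\<omega>. f (\<xi> (Suc n) \<omega>) \<partial>P) = (\<integral>s. f s \<partial>M)"
proof -
  have f: "f \<in> borel_measurable M" using assms by simp
  show "integrable P (\<lambda>\<omega>. f (\<xi> (Suc n) \<omega>))" "(\<integral>\<omega>. f (\<xi> (Suc n) \<omega>) \<partial>P) = (\<integral>s. f s \<partial>M)"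
    using integrable_distr_eq [OF \<xi>_measurable [of "Suc n"] f] integral_distr [OF \<xi>_measurable [of "Suc n"] f]
      assms distr_\<xi> [of n] by simp_all
qed

lemma borel_measurable_tinner_\<phi>s: "(\<lambda>s. tinner (\<phi>s s) (tlog xs y)) \<in> borel_measurable M"
proof -
  have dist_meas: "(\<lambda>s. tdist (\<phi>s s) w) \<in> borel_measurable M" if "w \<in> T xs" for w
    using \<phi>s that unfolding SA_def tLp_def tmeasurable_def borel_measurable_iff_less by blast
  have "tinner (\<phi>s s) (tlog xs y)
      = ((tdist (\<phi>s s) (tzero xs))\<^sup>2 + (dist xs y)\<^sup>2 - (tdist (\<phi>s s) (tlog xs y))\<^sup>2) / 2"
    if "s \<in> space M" for s
    using tdist_sq [of "\<phi>s s" "tlog xs y"] tnorm_nonneg [OF \<phi>s_in_T [OF that]]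
      tdist_tzero [OF \<phi>s_in_T [OF that]]
    by (simp add: tnorm_tlog)
  then show ?thesis
    by (rule measurable_cong [THEN iffD2])
      (use dist_meas tzero_in_T tlog_in_T [OF hadamard] in measurable)
qed

lemma isCont_tinner_\<phi>s:
  assumes "s \<in> space M"
  shows "isCont (\<lambda>y. tinner (\<phi>s s) (tlog xs y)) y"
proof -
  have "lipschitz_on (tnorm (\<phi>s s)) UNIV (\<lambda>y. tinner (\<phi>s s) (tlog xs y))"
  proof (rule lipschitz_onI)
    fix y y' :: 'a
    show "dist (tinner (\<phi>s s) (tlog xs y)) (tinner (\<phi>s s) (tlog xs y')) \<le> tnorm (\<phi>s s) * dist y y'"
      using tinner_tlog_diff_le [OF hadamard \<phi>s_in_T [OF assms], of y y']
        tinner_tlog_diff_le [OF hadamard \<phi>s_in_T [OF assms], of y' y]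
      by (simp add: dist_real_def abs_le_iff dist_commute)
    show "0 \<le> tnorm (\<phi>s s)" using tnorm_nonneg [OF \<phi>s_in_T [OF assms]] .
  qed
  then show ?thesis
    using continuous_on_eq_continuous_at lipschitz_on_continuous_on by blast
qed

lemma borel_measurable_cross_term:
  assumes "x n \<in> borel_measurable N" "\<xi> (Suc n) \<in> N \<rightarrow>\<^sub>M M"
  shows "cross_term n \<in> borel_measurable N"
  unfolding cross_term_def [abs_def]
  using borel_measurable_caratheodory [OF separable borel_measurable_tinner_\<phi>s isCont_tinner_\<phi>s]
    assms by blast

lemma abs_cross_term_le:
  assumes "\<omega> \<in> space P"
  shows "\<bar>cross_term n \<omega>\<bar> \<le> ((tnorm (\<phi>s (\<xi> (Suc n) \<omega>)))\<^sup>2 + (dist (x n \<omega>) xs)\<^sup>2) / 2"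
proof -
  let ?p = "tnorm (\<phi>s (\<xi> (Suc n) \<omega>))"
  have "\<bar>cross_term n \<omega>\<bar> \<le> ?p * dist (x n \<omega>) xs"
    using abs_tinner_tlog_le [OF \<phi>s_in_T [OF \<xi>_in_space [OF assms]], where a = "x n \<omega>"]
    unfolding cross_term_def by (simp add: dist_commute)
  also have "\<dots> \<le> (?p\<^sup>2 + (dist (x n \<omega>) xs)\<^sup>2) / 2"
    using zero_le_power2 [of "?p - dist (x n \<omega>) xs"] by (simp add: power2_eq_square algebra_simps)
  finally show ?thesis .
qed

lemma sq_err_step:
  assumes "\<omega> \<in> space P"
  shows "(dist (x (Suc n) \<omega>) xs)\<^sup>2 + 2 * lam n * ((dist (x n \<omega>) xs)\<^sup>2 * \<alpha> (\<xi> (Suc n) \<omega>))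
      \<le> (1 + 8 * (lam n)\<^sup>2) * (dist (x n \<omega>) xs)\<^sup>2 - 2 * lam n * cross_term n \<omega>
        + 2 * (lam n)\<^sup>2 * (tnorm (\<phi>s (\<xi> (Suc n) \<omega>)))\<^sup>2"
    and "(dist (x (Suc n) \<omega>) xs)\<^sup>2
      \<le> (dist (x n \<omega>) xs)\<^sup>2 - 2 * lam n * cross_term n \<omega>
        + 2 * (lam n)\<^sup>2 * (tnorm (\<phi>s (\<xi> (Suc n) \<omega>)))\<^sup>2"
proof -
  have s: "\<xi> (Suc n) \<omega> \<in> space M" using \<xi>_in_space [OF assms(1)] .
  note step = dist_resolvent_step [OF hadamard strong [OF s] \<alpha>_le_1 [OF s] surj [OF s] lam_pos
      \<phi>s_in_T [OF s] tmem_\<phi>s [OF s], where x = "x n \<omega>"]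
  show "(dist (x (Suc n) \<omega>) xs)\<^sup>2 + 2 * lam n * ((dist (x n \<omega>) xs)\<^sup>2 * \<alpha> (\<xi> (Suc n) \<omega>))
      \<le> (1 + 8 * (lam n)\<^sup>2) * (dist (x n \<omega>) xs)\<^sup>2 - 2 * lam n * cross_term n \<omega>
        + 2 * (lam n)\<^sup>2 * (tnorm (\<phi>s (\<xi> (Suc n) \<omega>)))\<^sup>2"
    using step(1) x_Suc [OF assms(1)] unfolding cross_term_def by (simp add: algebra_simps)
  show "(dist (x (Suc n) \<omega>) xs)\<^sup>2
      \<le> (dist (x n \<omega>) xs)\<^sup>2 - 2 * lam n * cross_term n \<omega>
        + 2 * (lam n)\<^sup>2 * (tnorm (\<phi>s (\<xi> (Suc n) \<omega>)))\<^sup>2"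
    using step(2) x_Suc [OF assms(1)] unfolding cross_term_def by simp
qed

lemma integrable_cross_term:
  assumes "x n \<in> borel_measurable P" "integrable P (\<lambda>\<omega>. (dist (x n \<omega>) xs)\<^sup>2)"
  shows "integrable P (cross_term n)"
proof (rule Bochner_Integration.integrable_bound)
  show "integrable P (\<lambda>\<omega>. ((tnorm (\<phi>s (\<xi> (Suc n) \<omega>)))\<^sup>2 + (dist (x n \<omega>) xs)\<^sup>2) / 2)"
    using integrable_integral_\<xi> (1) [OF integrable_tnorm_\<phi>s] assms(2) by auto
  show "cross_term n \<in> borel_measurable P"
    using borel_measurable_cross_term [OF assms(1) \<xi>_measurable] .
  show "AE \<omega> in P. norm (cross_term n \<omega>)
      \<le> norm (((tnorm (\<phi>s (\<xi> (Suc n) \<omega>)))\<^sup>2 + (dist (x n \<omega>) xs)\<^sup>2) / 2)"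
    using abs_cross_term_le by (intro AE_I2) force
qed

lemma adapted_integrable:
  "x n \<in> borel_measurable (filt P M \<xi> n) \<and> integrable P (\<lambda>\<omega>. (dist (x n \<omega>) xs)\<^sup>2)"
proof (induction n)
  case 0
  have "x 0 \<in> borel_measurable (filt P M \<xi> 0)"
    by (rule measurable_cong [of _ _ "\<lambda>_. x0", THEN iffD2]) (auto simp: x_0)
  moreover have "integrable P (\<lambda>\<omega>. (dist (x 0 \<omega>) xs)\<^sup>2)"
    by (rule Bochner_Integration.integrable_cong [THEN iffD2, of _ _ _ "\<lambda>_. (dist x0 xs)\<^sup>2"])
      (auto simp: x_0)
  ultimately show ?case by blast
next
  case (Suc n)
  have xn: "x n \<in> borel_measurable (filt P M \<xi> (Suc n))" "x n \<in> borel_measurable P"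
    using Suc measurable_filt_Suc measurable_from_subalg [OF subalgebra_filt_P]
    by blast+
  have "(\<lambda>\<omega>. resolvent (A (\<xi> (Suc n) \<omega>)) (lam n) (x n \<omega>)) \<in> borel_measurable (filt P M \<xi> (Suc n))"
    using borel_measurable_caratheodory [OF separable resolvent_measurable [OF lam_pos]
        isCont_resolvent [OF hadamard strongly_monotone_imp_monotone [OF strong] surj lam_pos]
        measurable_filt_xi [of \<xi> P M, OF \<xi>_measurable] xn(1)] .
  then have meas: "x (Suc n) \<in> borel_measurable (filt P M \<xi> (Suc n))"
    by (rule measurable_cong [THEN iffD2, rotated]) (simp add: x_Suc)
  have "integrable P (\<lambda>\<omega>. (dist (x (Suc n) \<omega>) xs)\<^sup>2)"
  proof (rule Bochner_Integration.integrable_bound)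
    show "integrable P (\<lambda>\<omega>. (dist (x n \<omega>) xs)\<^sup>2 - 2 * lam n * cross_term n \<omega>
        + 2 * (lam n)\<^sup>2 * (tnorm (\<phi>s (\<xi> (Suc n) \<omega>)))\<^sup>2)"
      using Suc integrable_cross_term [OF xn(2)] integrable_integral_\<xi> (1) [OF integrable_tnorm_\<phi>s]
      by auto
    show "(\<lambda>\<omega>. (dist (x (Suc n) \<omega>) xs)\<^sup>2) \<in> borel_measurable P"
      using borel_measurable_dist_sq measurable_from_subalg [OF subalgebra_filt_P meas] by blast
    show "AE \<omega> in P. norm ((dist (x (Suc n) \<omega>) xs)\<^sup>2) \<le> norm ((dist (x n \<omega>) xs)\<^sup>2
        - 2 * lam n * cross_term n \<omega> + 2 * (lam n)\<^sup>2 * (tnorm (\<phi>s (\<xi> (Suc n) \<omega>)))\<^sup>2)"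
      using sq_err_step (2) by (intro AE_I2) (smt (verit) real_norm_def zero_le_power2)
  qed
  with meas show ?case by blast
qed

lemma x_measurable: "x n \<in> borel_measurable P"
  using adapted_integrable measurable_from_subalg [OF subalgebra_filt_P] by blast

lemma integrable_sq_err: "integrable P (\<lambda>\<omega>. (dist (x n \<omega>) xs)\<^sup>2)"
  using adapted_integrable by blast

lemma mean_sq_err_nonneg: "0 \<le> mean_sq_err n"
  unfolding mean_sq_err_def by simp

lemma mean_sq_err_0: "mean_sq_err 0 = (dist x0 xs)\<^sup>2"
proof -
  have "mean_sq_err 0 = (\<integral>\<omega>. (dist x0 xs)\<^sup>2 \<partial>P)"
    unfolding mean_sq_err_def by (rule Bochner_Integration.integral_cong) (auto simp: x_0)
  then show ?thesis by (simp add: P.prob_space)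
qed

lemma nn_integral_sq_err: "(\<integral>\<^sup>+ \<omega>. ennreal ((dist (x n \<omega>) xs)\<^sup>2) \<partial>P) = ennreal (mean_sq_err n)"
  unfolding mean_sq_err_def using nn_integral_eq_integral [OF integrable_sq_err] by simp

lemma integral_cross_term: "(\<integral>\<omega>. cross_term n \<omega> \<partial>P) = 0"
proof -
  interpret sigma_finite_subalgebra P "filt P M \<xi> n"
    by (rule finite_measure_subalgebra_is_sigma_finite)
      (simp add: finite_measure_subalgebra_def finite_measure_subalgebra_axioms_def
        P.finite_measure_axioms subalgebra_filt_P)
  have "(\<integral>\<omega>. cross_term n \<omega> \<partial>P) = (\<integral>\<omega>. real_cond_exp P (filt P M \<xi> n) (cross_term n) \<omega> \<partial>P)"
    using real_cond_exp_int (2) [OF integrable_cross_term [OF x_measurable integrable_sq_err]] by simp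
  also have "\<dots> = 0"
    using integral_eq_zero_AE [OF cond_exp_cross_term] unfolding cross_term_def [abs_def] .
  finally show ?thesis .
qed

lemma integrable_integral_sq_err_\<alpha>:
  shows "integrable P (\<lambda>\<omega>. (dist (x n \<omega>) xs)\<^sup>2 * \<alpha> (\<xi> (Suc n) \<omega>))"
    and "(\<integral>\<omega>. (dist (x n \<omega>) xs)\<^sup>2 * \<alpha> (\<xi> (Suc n) \<omega>) \<partial>P) = mean_sq_err n * (\<integral>s. \<alpha> s \<partial>M)"
proof -
  have "integrable M \<alpha>"
  proof (rule M.integrable_const_bound [of _ 1])
    show "AE s in M. norm (\<alpha> s) \<le> 1"
      using \<alpha>_pos \<alpha>_le_1 by (intro AE_I2) (simp add: abs_of_pos)
  qed (rule \<alpha>_measurable)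
  note \<alpha>\<xi> = integrable_integral_\<xi> [OF this, of n]
  have "(\<lambda>\<omega>. (dist (x n \<omega>) xs)\<^sup>2) \<in> borel_measurable (filt P M \<xi> n)"
    using borel_measurable_dist_sq adapted_integrable by blast
  then have indep_n: "P.indep_var borel (\<lambda>\<omega>. (dist (x n \<omega>) xs)\<^sup>2) borel (\<lambda>\<omega>. \<alpha> (\<xi> (Suc n) \<omega>))"
    using indep_var_filt [OF P.prob_space_axioms, of \<xi> M, OF \<xi>_measurable indep _ \<alpha>_measurable] by blast
  show "integrable P (\<lambda>\<omega>. (dist (x n \<omega>) xs)\<^sup>2 * \<alpha> (\<xi> (Suc n) \<omega>))"
    using P.indep_var_integrable [OF indep_n integrable_sq_err \<alpha>\<xi>(1)] .
  show "(\<integral>\<omega>. (dist (x n \<omega>) xs)\<^sup>2 * \<alpha> (\<xi> (Suc n) \<omega>) \<partial>P) = mean_sq_err n * (\<integral>s. \<alpha> s \<partial>M)"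
    using P.indep_var_lebesgue_integral [OF indep_n integrable_sq_err \<alpha>\<xi>(1)] \<alpha>\<xi>(2)
    unfolding mean_sq_err_def by simp
qed

lemma mean_sq_err_step:
  defines "c0 \<equiv> \<integral>s. (tnorm (\<phi>s s))\<^sup>2 \<partial>M"
  shows "mean_sq_err (Suc n) + 2 * lam n * (\<integral>s. \<alpha> s \<partial>M) * mean_sq_err n
      \<le> (1 + 8 * (lam n)\<^sup>2) * mean_sq_err n + 2 * (lam n)\<^sup>2 * c0"
    and "mean_sq_err (Suc n) \<le> mean_sq_err n + 2 * (lam n)\<^sup>2 * c0"
proof -
  note ints = integrable_sq_err integrable_integral_sq_err_\<alpha> (1)
    integrable_cross_term [OF x_measurable integrable_sq_err]
    integrable_integral_\<xi> (1) [OF integrable_tnorm_\<phi>s]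
  note vals = integral_cross_term integrable_integral_sq_err_\<alpha> (2)
    integrable_integral_\<xi> (2) [OF integrable_tnorm_\<phi>s]
  have "(\<integral>\<omega>. (dist (x (Suc n) \<omega>) xs)\<^sup>2 + 2 * lam n * ((dist (x n \<omega>) xs)\<^sup>2 * \<alpha> (\<xi> (Suc n) \<omega>)) \<partial>P)
      \<le> (\<integral>\<omega>. (1 + 8 * (lam n)\<^sup>2) * (dist (x n \<omega>) xs)\<^sup>2 - 2 * lam n * cross_term n \<omega>
          + 2 * (lam n)\<^sup>2 * (tnorm (\<phi>s (\<xi> (Suc n) \<omega>)))\<^sup>2 \<partial>P)"
    using sq_err_step (1) ints by (intro integral_mono) auto
  then show "mean_sq_err (Suc n) + 2 * lam n * (\<integral>s. \<alpha> s \<partial>M) * mean_sq_err n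
      \<le> (1 + 8 * (lam n)\<^sup>2) * mean_sq_err n + 2 * (lam n)\<^sup>2 * c0"
    using ints vals unfolding mean_sq_err_def c0_def by (simp add: algebra_simps)
  have "(\<integral>\<omega>. (dist (x (Suc n) \<omega>) xs)\<^sup>2 \<partial>P)
      \<le> (\<integral>\<omega>. (dist (x n \<omega>) xs)\<^sup>2 - 2 * lam n * cross_term n \<omega>
          + 2 * (lam n)\<^sup>2 * (tnorm (\<phi>s (\<xi> (Suc n) \<omega>)))\<^sup>2 \<partial>P)"
    using sq_err_step (2) ints by (intro integral_mono) auto
  then show "mean_sq_err (Suc n) \<le> mean_sq_err n + 2 * (lam n)\<^sup>2 * c0"
    using ints vals unfolding mean_sq_err_def c0_def by simp
qed

end

theorem mainTheorem8:
  fixes P :: "'w measure" and M :: "'e measure"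
    and A :: "'e \<Rightarrow> 'a::complete_space \<Rightarrow> 'a tv set"
    and \<alpha> :: "'e \<Rightarrow> real"
    and lam :: "nat \<Rightarrow> real" and \<xi> :: "nat \<Rightarrow> 'w \<Rightarrow> 'e"
    and x0 xs :: 'a and x :: "nat \<Rightarrow> 'w \<Rightarrow> 'a"
    and \<phi>s :: "'e \<Rightarrow> 'a tv"
    and \<theta> :: "nat \<Rightarrow> real \<Rightarrow> nat" and \<Lambda> c b :: real
  assumes hadamard: "hadamard TYPE('a)"
    and sep: "separable_type TYPE('a)"
    and sepT: "\<forall>y::'a. tsep y"
    and probE: "prob_space M" and probP: "prob_space P"
    and mono: "\<forall>s\<in>space M. monotone_vf (A s)"
    and surj: "\<forall>s\<in>space M. surjectivity_cond (A s)"
    and meas: "\<forall>l>0. \<forall>y. (\<lambda>s. resolvent (A s) l y) \<in> M \<rightarrow>\<^sub>M borel"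
    and lam_pos: "\<forall>n. lam n > 0"
    and iter0: "\<forall>\<omega>\<in>space P. x 0 \<omega> = x0"
    and iterS: "\<forall>n. \<forall>\<omega>\<in>space P. x (Suc n) \<omega> = resolvent (A (\<xi> (Suc n) \<omega>)) (lam n) (x n \<omega>)"
    \<comment> \<open>(A0)\<close>
    and sq_sum: "summable (\<lambda>n. (lam n)\<^sup>2)"
    and not_sum: "\<not> summable lam"
    and xi_meas: "\<forall>n. \<xi> n \<in> P \<rightarrow>\<^sub>M M"
    and indep: "prob_space.indep_vars P (\<lambda>_. M) (\<lambda>n. \<xi> (Suc n)) UNIV"
    and distr: "\<forall>n. distr P M (\<xi> (Suc n)) = M"
    \<comment> \<open>(A1)\<close>
    and \<alpha>_meas: "\<alpha> \<in> borel_measurable M"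
    and \<alpha>_range: "\<forall>s\<in>space M. 0 < \<alpha> s \<and> \<alpha> s \<le> 1"
    and \<alpha>_int: "(\<integral>s. \<alpha> s \<partial>M) > 0"
    and strong: "\<forall>s\<in>space M. strongly_monotone_vf (A s) (\<alpha> s)"
    \<comment> \<open>(A2)\<close>
    and zero: "zero_of_mean_field M A xs"
    and xsZ: "xs \<in> ZA2 M A"
    and \<phi>s_S2: "\<phi>s \<in> SA 2 M A xs"
    and \<phi>s_int: "tbary M xs \<phi>s (tzero xs)"
    \<comment> \<open>(A3)\<close>
    and A3: "\<forall>n. AE \<omega> in P. real_cond_exp P (filt P M \<xi> n)
               (\<lambda>\<omega>. tinner (\<phi>s (\<xi> (Suc n) \<omega>)) (tlog xs (x n \<omega>))) \<omega> = 0"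
    \<comment> \<open>parameters\<close>
    and \<theta>: "\<forall>b'>0. \<forall>k. (\<Sum>n=k..\<theta> k b'. lam n) \<ge> b'"
    and \<Lambda>: "\<Lambda> > (\<Sum>n. (lam n)\<^sup>2)"
    and c: "c > (\<integral>s. (tnorm (\<phi>s s))\<^sup>2 \<partial>M)" "c > 0"
    and b: "b > (dist x0 xs)\<^sup>2" "b > 0"
  defines "C \<equiv> 4 * (b + 2 * \<Lambda> * c) + \<Lambda> * c"
    and "D \<equiv> exp (2 * \<Lambda>) * (b + (4 * (b + 2 * \<Lambda> * c) + \<Lambda> * c)) / (2 * (\<integral>s. \<alpha> s \<partial>M))"
  shows "liminf (\<lambda>n. \<integral>\<^sup>+ \<omega>. ennreal ((dist (x n \<omega>) xs)\<^sup>2) \<partial>P) = 0 \<and>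
         (\<forall>\<epsilon>>0. \<forall>N. \<exists>n\<in>{N..\<theta> N (D / \<epsilon>)}.
             (\<integral>\<^sup>+ \<omega>. ennreal ((dist (x n \<omega>) xs)\<^sup>2) \<partial>P) < ennreal \<epsilon>)"
proof -
  interpret stochastic_proximal_point P M A \<alpha> lam \<xi> x0 xs x \<phi>s
    by (intro stochastic_proximal_point.intro stochastic_proximal_point_axioms.intro)
      (use probP probE hadamard sep surj meas lam_pos iter0 iterS xi_meas indep distr \<alpha>_meas
        \<alpha>_range strong \<phi>s_S2 A3 in blast)+
  define c0 where "c0 = (\<integral>s. (tnorm (\<phi>s s))\<^sup>2 \<partial>M)"
  define S where "S = (\<Sum>n. (lam n)\<^sup>2)"
  have "0 \<le> S" unfolding S_def using sq_sum by (simp add: suminf_nonneg)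
  have "0 \<le> c0" unfolding c0_def by simp
  have sum_less: "(\<Sum>n<m. lam n * mean_sq_err n) < D" for m
  proof -
    have "2 * (\<integral>s. \<alpha> s \<partial>M) * (\<Sum>n<m. lam n * mean_sq_err n)
        \<le> mean_sq_err 0 + (8 * (mean_sq_err 0 + 2 * c0 * S) + 2 * c0) * S"
      unfolding S_def c0_def
      by (rule weighted_sum_le [OF mean_sq_err_nonneg _ sq_sum mean_sq_err_step(2,1)]) simp
    also have "\<dots> < exp (2 * \<Lambda>) * (b + (4 * (b + 2 * \<Lambda> * c) + \<Lambda> * c))"
      by (rule error_constant_less)
        (use mean_sq_err_nonneg mean_sq_err_0 b(1) c(1) \<Lambda> \<open>0 \<le> c0\<close> \<open>0 \<le> S\<close> in
          \<open>auto simp: c0_def S_def\<close>)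
    finally show ?thesis using \<alpha>_int unfolding D_def by (simp add: field_simps)
  qed
  have small: "\<exists>n\<in>{N..\<theta> N (D / \<epsilon>)}. mean_sq_err n < \<epsilon>" if "0 < \<epsilon>" for \<epsilon> N
    using exists_small_in_window [OF lam_pos mean_sq_err_nonneg _ sum_less that] \<theta> by blast
  then have "liminf (\<lambda>n. ennreal (mean_sq_err n)) = 0"
    by (intro liminf_ennreal_eq_0I) (meson atLeastAtMost_iff)
  with small show ?thesis by (simp add: nn_integral_sq_err ennreal_less_iff mean_sq_err_nonneg)
qed

end
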